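(* Consider the perturbed federated algorithm described in the context, with $\beta\in(0,1)$, and a round $t$ whose step size satisfies $\gamma_t\le\min\{\frac1{2L},\frac1{\beta\mu}\}$. Assume that the bounded variance, bounded stochastic gradient norm, $L$-smoothness and $\mu$-strong convexity assumptions hold. Then $$\mathbb{E}\|\overline{\mathbf{w}}_{t+1,0}-\mathbf{w}_\star\|^2\le\kappa\,\mathbb{E}\|\overline{\mathbf{w}}_{t,0}-\mathbf{w}_\star\|^2+A,$$ where $$\kappa=1-\frac1\beta+\frac1\beta(1-\beta\mu\gamma_t)^E\le1-\mu\gamma_t$$ and $$A=8\gamma_t^2E^3G^2\Big[4+(1-\beta)^2+\frac{\mathbb{1}_{t\ge1}8\gamma_{t-1}^2(1-\beta)^2}{\gamma_t^2\beta^2}\Big]+\mu\gamma_t^3\beta(1-\beta)E^3G^2+\gamma_t^2ES\sigma^2+6\gamma_t^2LE\Gamma,$$ with $S=\sum_ip_i^2$.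
   Context: Setting: there are $C$ clients with local objectives $F_i:\mathbb{R}^D\to\mathbb{R}$. Similarity weights $p_{in}\ge0$ are symmetric, satisfy $p_{ii}=0$, and $\sum_{i,n}p_{in}=1$. Let $p_i=\sum_np_{in}>0$ and $F=\sum_ip_iF_i$. Algorithm, with parameter $\beta$, $E\ge1$ local steps and step sizes $\gamma_t$, all clients participating: - $\mathbf{u}^i_0=\overline{\mathbf{w}}_{0,0}$. - In round $t$, $\mathbf{w}^i_{t,0}=\overline{\mathbf{w}}_{t,0}$. For $k=0,\dots,E-1$, $\widetilde{\mathbf{w}}^i_{t,k}=\beta\mathbf{w}^i_{t,k}+(1-\beta)\mathbf{u}^i_t$ and $\mathbf{w}^i_{t,k+1}=\mathbf{w}^i_{t,k}-\gamma_tg_i(\widetilde{\mathbf{w}}^i_{t,k})$, with stochastic gradients $g_i$ of $F_i$ sampled independently across clients and steps given the past. - $\overline{\mathbf{w}}_{t,k}=\sum_ip_i\mathbf{w}^i_{t,k}$ and $\overline{\mathbf{w}}_{t+1,0}=\overline{\mathbf{w}}_{t,E}$. - For $t\ge1$, $\mathbf{u}^i_t=\frac1{p_i}\sum_np_{in}\mathbf{w}^n_{t-1,E}$. Assumptions: - Unbiasedness: $\mathbb{E}\,g_i(\widetilde{\mathbf{w}}^i_{t,k})=\nabla F_i(\widetilde{\mathbf{w}}^i_{t,k})$. - Variance: $\mathbb{E}\|g_i-\nabla F_i\|^2\le\sigma^2$ at these points. - Bounded second moment: $\mathbb{E}\|g_i(\widetilde{\mathbf{w}}^i_{t,k})\|^2\le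 G^2$. - Each $F_i$ is $L$-smooth and $\mu$-strongly convex. Notation: $\mathbf{w}_\star=\arg\min F$ and $f_\star=F(\mathbf{w}_\star)$. Also $\mathbf{w}^i_\star=\arg\min F_i$ and $\Gamma=f_\star-\sum_ip_iF_i(\mathbf{w}^i_\star)$. $\mathbb{E}$ is total expectation. *)

theory Defs
  imports "HOL-Probability.Probability"
begin

definition L_smooth :: "real \<Rightarrow> ('w::euclidean_space \<Rightarrow> real) \<Rightarrow> ('w \<Rightarrow> 'w) \<Rightarrow> bool" where
  "L_smooth L f df \<longleftrightarrow>
     (\<forall>x. (f has_derivative (\<lambda>h. df x \<bullet> h)) (at x)) \<and>
     (\<forall>x y. norm (df x - df y) \<le> L * norm (x - y))"

definition strongly_convex :: "real \<Rightarrow> ('w::euclidean_space \<Rightarrow> real) \<Rightarrow> bool" where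
  "strongly_convex \<mu> f \<longleftrightarrow> convex_on UNIV (\<lambda>x. f x - \<mu> / 2 * (norm x)\<^sup>2)"

definition pw :: "('c::finite \<Rightarrow> 'c \<Rightarrow> real) \<Rightarrow> 'c \<Rightarrow> real" where
  "pw p i = (\<Sum>n\<in>UNIV. p i n)"

text \<open>Local iterate w^i_{t,k}(omega) in round t, starting at the broadcast average wb,
  with personalised anchors u; sg t k i w omega is the stochastic gradient of client i
  sampled at step (t,k) evaluated at point w.\<close>
fun loc :: "real \<Rightarrow> (nat \<Rightarrow> real) \<Rightarrow> (nat \<Rightarrow> nat \<Rightarrow> 'c \<Rightarrow> 'w::real_vector \<Rightarrow> 'a \<Rightarrow> 'w)
            \<Rightarrow> 'w \<Rightarrow> ('c \<Rightarrow> 'w) \<Rightarrow> nat \<Rightarrow> nat \<Rightarrow> 'c \<Rightarrow> 'a \<Rightarrow> 'w" where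
  "loc \<beta> \<gamma> sg wb u t 0 i \<omega> = wb"
| "loc \<beta> \<gamma> sg wb u t (Suc k) i \<omega> =
     loc \<beta> \<gamma> sg wb u t k i \<omega>
     - \<gamma> t *\<^sub>R sg t k i (\<beta> *\<^sub>R loc \<beta> \<gamma> sg wb u t k i \<omega> + (1 - \<beta>) *\<^sub>R u i) \<omega>"

definition pert :: "real \<Rightarrow> (nat \<Rightarrow> real) \<Rightarrow> (nat \<Rightarrow> nat \<Rightarrow> 'c \<Rightarrow> 'w::real_vector \<Rightarrow> 'a \<Rightarrow> 'w)
            \<Rightarrow> 'w \<Rightarrow> ('c \<Rightarrow> 'w) \<Rightarrow> nat \<Rightarrow> nat \<Rightarrow> 'c \<Rightarrow> 'a \<Rightarrow> 'w" where
  "pert \<beta> \<gamma> sg wb u t k i \<omega> = \<beta> *\<^sub>R loc \<beta> \<gamma> sg wb u t k i \<omega> + (1 - \<beta>) *\<^sub>R u i"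

text \<open>State at the start of round t: (wbar_{t,0}, (u^i_t)_i).\<close>
fun st :: "('c::finite \<Rightarrow> 'c \<Rightarrow> real) \<Rightarrow> real \<Rightarrow> nat \<Rightarrow> (nat \<Rightarrow> real)
           \<Rightarrow> (nat \<Rightarrow> nat \<Rightarrow> 'c \<Rightarrow> 'w::real_vector \<Rightarrow> 'a \<Rightarrow> 'w) \<Rightarrow> 'w \<Rightarrow> nat \<Rightarrow> 'a \<Rightarrow> 'w \<times> ('c \<Rightarrow> 'w)" where
  "st p \<beta> E \<gamma> sg w0 0 \<omega> = (w0, \<lambda>i. w0)"
| "st p \<beta> E \<gamma> sg w0 (Suc t) \<omega> =
     (let wb = fst (st p \<beta> E \<gamma> sg w0 t \<omega>);
          u  = snd (st p \<beta> E \<gamma> sg w0 t \<omega>);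
          wE = (\<lambda>n. loc \<beta> \<gamma> sg wb u t E n \<omega>)
      in ((\<Sum>i\<in>UNIV. pw p i *\<^sub>R wE i),
          (\<lambda>i. (1 / pw p i) *\<^sub>R (\<Sum>n\<in>UNIV. p i n *\<^sub>R wE n))))"

definition wbar where "wbar p \<beta> E \<gamma> sg w0 t \<omega> = fst (st p \<beta> E \<gamma> sg w0 t \<omega>)"
definition uanc where "uanc p \<beta> E \<gamma> sg w0 t \<omega> = snd (st p \<beta> E \<gamma> sg w0 t \<omega>)"

end

theory Submission
  imports Defs
begin

text \<open>Averaging the perturbed points beta w^i_{t,k} + (1 - beta) u^i_t with the weights p_i gives a virtual
  sequence v_k: it starts at w_{t,0}, takes stochastic gradient steps of size beta gamma_t on F with gradients
  sampled at the perturbed points, and w_{t+1,0} = v_E / beta + (1 - 1 / beta) w_{t,0}.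
  The fresh noise is independent of the past, so unbiasedness replaces the sampled gradients by true ones in the
  cross term; strong convexity at the perturbed points and smoothness between them and v_k then give
  E |v_{k+1} - w*|^2 <= (1 - beta mu gamma_t) E |v_k - w*|^2 + 2 beta gamma_t L E D_k + beta^2 gamma_t^2 G^2,
  where the dispersion D_k of the perturbed points around v_k is bounded by the local drift in the current round
  and, through the anchors u^i_t, in the previous one. Unrolling the E local steps and undoing the extrapolation
  produces the factor kappa.\<close>

lemma norm_add_square:
  fixes u v :: "'a::real_inner"
  shows "(norm (u + v))\<^sup>2 = (norm u)\<^sup>2 + 2 * (u \<bullet> v) + (norm v)\<^sup>2"
  by (simp add: power2_norm_eq_inner inner_add_left inner_add_right inner_commute)

lemma norm_diff_square:
  fixes u v :: "'a::real_inner"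
  shows "(norm (u - v))\<^sup>2 = (norm u)\<^sup>2 - 2 * (u \<bullet> v) + (norm v)\<^sup>2"
  by (simp add: power2_norm_eq_inner inner_diff_left inner_diff_right inner_commute)

lemma norm_add_square_le:
  fixes u v :: "'a::real_normed_vector"
  shows "(norm (u + v))\<^sup>2 \<le> 2 * (norm u)\<^sup>2 + 2 * (norm v)\<^sup>2"
proof -
  have "(norm (u + v))\<^sup>2 \<le> (norm u + norm v)\<^sup>2"
    by (simp add: power_mono norm_triangle_ineq)
  also have "\<dots> \<le> 2 * (norm u)\<^sup>2 + 2 * (norm v)\<^sup>2"
    using zero_le_power2[of "norm u - norm v"] unfolding power2_diff power2_sum by linarith
  finally show ?thesis .
qed

lemma norm_sum_square_le_card:
  fixes z :: "'i \<Rightarrow> 'a::real_normed_vector"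
  shows "(norm (\<Sum>j\<in>A. z j))\<^sup>2 \<le> real (card A) * (\<Sum>j\<in>A. (norm (z j))\<^sup>2)"
proof -
  have "(norm (\<Sum>j\<in>A. z j))\<^sup>2 \<le> (\<Sum>j\<in>A. norm (z j))\<^sup>2"
    by (simp add: power_mono norm_sum)
  also have "\<dots> \<le> real (card A) * (\<Sum>j\<in>A. (norm (z j))\<^sup>2)"
    using sum_squared_le_sum_of_squares[of "\<lambda>j. norm (z j)" A] by (simp add: mult.commute)
  finally show ?thesis .
qed

lemma norm_affine_combination_square:
  fixes x y :: "'a::real_inner"
  assumes "a + b = 1"
  shows "(norm (a *\<^sub>R x + b *\<^sub>R y))\<^sup>2 = a * (norm x)\<^sup>2 + b * (norm y)\<^sup>2 - a * b * (norm (x - y))\<^sup>2"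
proof -
  have b: "b = 1 - a" using assms by simp
  have "(norm (a *\<^sub>R x + b *\<^sub>R y))\<^sup>2 = a\<^sup>2 * (norm x)\<^sup>2 + 2 * a * b * (x \<bullet> y) + b\<^sup>2 * (norm y)\<^sup>2"
    by (simp add: norm_add_square power_mult_distrib)
  then show ?thesis
    unfolding norm_diff_square b by (simp add: algebra_simps power2_eq_square)
qed

lemma weighted_sum_dist_square_decomp:
  fixes z :: "'i \<Rightarrow> 'a::real_inner"
  assumes "sum a A = 1"
  shows "(\<Sum>i\<in>A. a i * (norm (z i - c))\<^sup>2) =
    (\<Sum>i\<in>A. a i * (norm (z i - (\<Sum>j\<in>A. a j *\<^sub>R z j)))\<^sup>2) + (norm ((\<Sum>j\<in>A. a j *\<^sub>R z j) - c))\<^sup>2"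
proof -
  define m where "m = (\<Sum>j\<in>A. a j *\<^sub>R z j)"
  have split: "(norm (z i - c))\<^sup>2 = (norm (z i - m))\<^sup>2 + 2 * ((z i - m) \<bullet> (m - c)) + (norm (m - c))\<^sup>2" for i
    using norm_add_square[of "z i - m" "m - c"] by simp
  have "(\<Sum>i\<in>A. a i * ((z i - m) \<bullet> (m - c))) = (\<Sum>i\<in>A. a i *\<^sub>R (z i - m)) \<bullet> (m - c)"
    by (simp add: inner_sum_left)
  also have "(\<Sum>i\<in>A. a i *\<^sub>R (z i - m)) = m - sum a A *\<^sub>R m"
    by (simp add: m_def scaleR_diff_right sum_subtractf scaleR_sum_left)
  finally have cross: "(\<Sum>i\<in>A. a i * ((z i - m) \<bullet> (m - c))) = 0" using assms by simp
  have "(\<Sum>i\<in>A. a i * (norm (z i - c))\<^sup>2) = (\<Sum>i\<in>A. a i * (norm (z i - m))\<^sup>2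
      + 2 * (a i * ((z i - m) \<bullet> (m - c))) + a i * (norm (m - c))\<^sup>2)"
    by (rule sum.cong) (simp_all only: split algebra_simps)
  also have "\<dots> = (\<Sum>i\<in>A. a i * (norm (z i - m))\<^sup>2)
      + 2 * (\<Sum>i\<in>A. a i * ((z i - m) \<bullet> (m - c))) + sum a A * (norm (m - c))\<^sup>2"
    by (simp only: sum.distrib sum_distrib_left sum_distrib_right)
  finally show ?thesis using cross assms by (simp add: m_def)
qed

lemma norm_weighted_mean_dist_square_le:
  fixes z :: "'i \<Rightarrow> 'a::real_inner"
  assumes "sum a A = 1" "\<And>i. i \<in> A \<Longrightarrow> a i \<ge> 0"
  shows "(norm ((\<Sum>j\<in>A. a j *\<^sub>R z j) - c))\<^sup>2 \<le> (\<Sum>i\<in>A. a i * (norm (z i - c))\<^sup>2)"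
  using weighted_sum_dist_square_decomp[OF assms(1), of z c] assms(2) by (simp add: sum_nonneg)

lemma weighted_dist_square_mean_le:
  fixes z :: "'i \<Rightarrow> 'a::real_inner"
  assumes "sum a A = 1"
  shows "(\<Sum>i\<in>A. a i * (norm (z i - (\<Sum>j\<in>A. a j *\<^sub>R z j)))\<^sup>2) \<le> (\<Sum>i\<in>A. a i * (norm (z i - c))\<^sup>2)"
  using weighted_sum_dist_square_decomp[OF assms, of z c] by simp

lemma linear_recurrence_bound:
  fixes a :: "nat \<Rightarrow> real"
  assumes step: "\<And>k. k < n \<Longrightarrow> a (Suc k) \<le> q * a k + e"
    and "0 \<le> q" "q \<le> 1" "0 \<le> e" "k \<le> n"
  shows "a k \<le> q ^ k * a 0 + real k * e"
  using \<open>k \<le> n\<close>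
proof (induction k)
  case 0 then show ?case by simp
next
  case (Suc k)
  have "a (Suc k) \<le> q * a k + e"
    using Suc.prems by (intro step) simp
  also have "\<dots> \<le> q * (q ^ k * a 0 + real k * e) + e"
    using Suc \<open>0 \<le> q\<close> by (simp add: mult_left_mono)
  also have "\<dots> \<le> q ^ Suc k * a 0 + real k * e + e"
    using mult_left_le_one_le[of "real k * e" q] assms(2-4) by (simp add: algebra_simps)
  finally show ?case by (simp add: algebra_simps)
qed

section \<open>Smooth and strongly convex functions\<close>

lemma convex_on_along_line:
  assumes "convex_on UNIV h"
  shows "convex_on UNIV (\<lambda>s::real. h (x + s *\<^sub>R d))"
proof (rule convex_onI)
  fix u s1 s2 :: real assume u: "0 < u" "u < 1"
  have "x + ((1 - u) *\<^sub>R s1 + u *\<^sub>R s2) *\<^sub>R d = (1 - u) *\<^sub>R (x + s1 *\<^sub>R d) + u *\<^sub>R (x + s2 *\<^sub>R d)"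
    by (simp add: algebra_simps)
  moreover have "h ((1 - u) *\<^sub>R (x + s1 *\<^sub>R d) + u *\<^sub>R (x + s2 *\<^sub>R d))
      \<le> (1 - u) * h (x + s1 *\<^sub>R d) + u * h (x + s2 *\<^sub>R d)"
    using convex_onD[OF assms] u by auto
  ultimately show "h (x + ((1 - u) *\<^sub>R s1 + u *\<^sub>R s2) *\<^sub>R d) \<le> (1 - u) * h (x + s1 *\<^sub>R d) + u * h (x + s2 *\<^sub>R d)"
    by simp
qed simp

lemma strongly_convex_above_tangent:
  fixes f :: "'w::euclidean_space \<Rightarrow> real"
  assumes sc: "strongly_convex \<mu> f" and d: "\<And>x. (f has_derivative (\<lambda>h. df x \<bullet> h)) (at x)"
  shows "f x + df x \<bullet> (y - x) + \<mu> / 2 * (norm (y - x))\<^sup>2 \<le> f y"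
proof -
  define h where "h v = f v - \<mu> / 2 * (v \<bullet> v)" for v
  define \<phi> where "\<phi> s = h (x + s *\<^sub>R (y - x))" for s :: real
  have "convex_on UNIV \<phi>"
    unfolding \<phi>_def by (rule convex_on_along_line)
      (use sc in \<open>simp add: strongly_convex_def h_def power2_norm_eq_inner\<close>)
  have line: "((\<lambda>s. x + s *\<^sub>R (y - x)) has_derivative (\<lambda>s. s *\<^sub>R (y - x))) (at 0)"
    by (auto intro!: derivative_eq_intros)
  have "(h has_derivative (\<lambda>v. df x \<bullet> v - \<mu> / 2 * (x \<bullet> v + v \<bullet> x))) (at (x + 0 *\<^sub>R (y - x)))"
    unfolding h_def scaleR_zero_left add_0_right
    by (intro has_derivative_diff d has_derivative_mult_right has_derivative_inner has_derivative_ident)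
  from has_derivative_compose[OF line this]
  have "(\<phi> has_derivative (\<lambda>s. df x \<bullet> (s *\<^sub>R (y - x)) - \<mu> / 2 * (x \<bullet> (s *\<^sub>R (y - x)) + (s *\<^sub>R (y - x)) \<bullet> x))) (at 0)"
    by (simp add: \<phi>_def[abs_def] o_def)
  then have "(\<phi> has_real_derivative (df x \<bullet> (y - x) - \<mu> * (x \<bullet> (y - x)))) (at 0)"
    unfolding has_field_derivative_def
    by (rule has_derivative_eq_rhs) (auto simp: fun_eq_iff algebra_simps inner_commute)
  from convex_on_imp_above_tangent[OF \<open>convex_on UNIV \<phi>\<close> _ _ _ has_field_derivative_at_within[OF this], of 1]
  have "df x \<bullet> (y - x) - \<mu> * (x \<bullet> (y - x)) \<le> \<phi> 1 - \<phi> 0" by simp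
  then show ?thesis
    by (simp add: \<phi>_def h_def power2_norm_eq_inner inner_commute algebra_simps)
qed

lemma L_smooth_nonneg:
  assumes "L_smooth L f (df :: 'w::euclidean_space \<Rightarrow> 'w)"
  shows "L \<ge> 0"
proof -
  obtain e :: 'w where "e \<in> Basis" using nonempty_Basis by blast
  then have "norm (e - 0) > 0" by auto
  moreover have "0 \<le> L * norm (e - 0)"
    using assms unfolding L_smooth_def by (meson norm_ge_zero order.trans)
  ultimately show ?thesis by (simp add: zero_le_mult_iff)
qed

lemma L_smooth_continuous_grad:
  assumes "L_smooth L f df"
  shows "continuous_on UNIV df"
proof -
  have "L-lipschitz_on UNIV df"
    using assms L_smooth_nonneg[OF assms] unfolding L_smooth_def by (intro lipschitz_onI) (auto simp: dist_norm)
  then show ?thesis by (rule lipschitz_on_continuous_on)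
qed

text \<open>The descent lemma with the constant \<open>L\<close> in place of the sharp \<open>L / 2\<close>, which is all that is needed.\<close>

lemma L_smooth_below_quadratic:
  fixes f :: "'w::euclidean_space \<Rightarrow> real"
  assumes sm: "L_smooth L f df"
  shows "f y \<le> f x + df x \<bullet> (y - x) + L * (norm (y - x))\<^sup>2"
proof -
  have d: "\<And>z. (f has_derivative (\<lambda>h. df z \<bullet> h)) (at z)"
    and lip: "\<And>a b. norm (df a - df b) \<le> L * norm (a - b)" using sm unfolding L_smooth_def by auto
  have onorm_bound: "onorm ((\<lambda>h. df z \<bullet> h) - (\<lambda>h. df x \<bullet> h)) \<le> L * norm (y - x)"
    if "z \<in> closed_segment x y" for z
  proof -
    have "onorm ((\<lambda>h. df z \<bullet> h) - (\<lambda>h. df x \<bullet> h)) \<le> norm (df z - df x)"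
      by (rule onorm_le) (simp add: inner_diff_left[symmetric] Cauchy_Schwarz_ineq2)
    also have "\<dots> \<le> L * norm (z - x)" by (rule lip)
    also have "\<dots> \<le> L * norm (y - x)"
      using that L_smooth_nonneg[OF sm]
      by (intro mult_left_mono) (auto simp: dist_norm[symmetric] dist_commute dest: dist_in_closed_segment)
    finally show ?thesis .
  qed
  have "norm (f y - f x - df x \<bullet> (y - x)) \<le> norm (y - x) * (L * norm (y - x))"
  proof (rule differentiable_bound_linearization[where S = "closed_segment x y" and f' = "\<lambda>z h. df z \<bullet> h"])
    show "x + t *\<^sub>R (y - x) \<in> closed_segment x y" if "t \<in> {0..1}" for t
      using that unfolding closed_segment_def by (auto intro!: exI[where x = t] simp: algebra_simps)
  qed (use d onorm_bound in \<open>auto intro: has_derivative_at_withinI\<close>)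
  then show ?thesis by (simp add: power2_eq_square algebra_simps)
qed

text \<open>The gradient is taken at the perturbed point \<open>y\<close>; comparing \<open>f\<close> at \<open>v\<close> instead costs \<open>L |v - y|\<^sup>2\<close>.\<close>

lemma inner_grad_lower_bound:
  fixes f :: "'w::euclidean_space \<Rightarrow> real"
  assumes sm: "L_smooth L f df" and sc: "strongly_convex \<mu> f"
  shows "f v - f w + \<mu> / 2 * (norm (y - w))\<^sup>2 - L * (norm (v - y))\<^sup>2 \<le> (v - w) \<bullet> df y"
proof -
  have "f y + df y \<bullet> (w - y) + \<mu> / 2 * (norm (y - w))\<^sup>2 \<le> f w"
    using strongly_convex_above_tangent[OF sc, of df y w] sm
    by (simp add: L_smooth_def norm_minus_commute)
  moreover have "f v \<le> f y + df y \<bullet> (v - y) + L * (norm (v - y))\<^sup>2"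
    by (rule L_smooth_below_quadratic[OF sm])
  moreover have "(v - w) \<bullet> df y = df y \<bullet> (v - y) - df y \<bullet> (w - y)"
    by (simp add: inner_diff_left inner_diff_right inner_commute)
  ultimately show ?thesis by linarith
qed

section \<open>Square-integrable random vectors and independent sampling\<close>

definition square_integrable :: "'a measure \<Rightarrow> ('a \<Rightarrow> 'w::euclidean_space) \<Rightarrow> bool" where
  "square_integrable M f \<longleftrightarrow> f \<in> borel_measurable M \<and> integrable M (\<lambda>x. (norm (f x))\<^sup>2)"

lemma square_integrable_norm_square: "square_integrable M f \<Longrightarrow> integrable M (\<lambda>x. (norm (f x))\<^sup>2)"
  by (simp add: square_integrable_def)

lemma (in finite_measure) square_integrable_const: "square_integrable M (\<lambda>_. c)"
  by (simp add: square_integrable_def)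

lemma square_integrable_add:
  assumes "square_integrable M f" "square_integrable M g"
  shows "square_integrable M (\<lambda>x. f x + g x)"
proof -
  have m: "(\<lambda>x. f x + g x) \<in> borel_measurable M"
    using assms unfolding square_integrable_def by (intro borel_measurable_add) auto
  have "integrable M (\<lambda>x. 2 * (norm (f x))\<^sup>2 + 2 * (norm (g x))\<^sup>2)"
    using assms by (simp add: square_integrable_def)
  then have "integrable M (\<lambda>x. (norm (f x + g x))\<^sup>2)"
    by (rule Bochner_Integration.integrable_bound) (use m norm_add_square_le in auto)
  with m show ?thesis by (simp add: square_integrable_def)
qed

lemma square_integrable_scaleR:
  assumes "square_integrable M f"
  shows "square_integrable M (\<lambda>x. c *\<^sub>R f x)"
proof -
  have "(\<lambda>x. c *\<^sub>R f x) \<in> borel_measurable M"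
    using assms unfolding square_integrable_def by (intro borel_measurable_scaleR) auto
  with assms show ?thesis by (simp add: square_integrable_def power_mult_distrib)
qed

lemma square_integrable_diff:
  assumes "square_integrable M f" "square_integrable M g"
  shows "square_integrable M (\<lambda>x. f x - g x)"
  using square_integrable_add[OF assms(1) square_integrable_scaleR[OF assms(2), of "-1"]] by simp

lemma (in finite_measure) square_integrable_sum:
  assumes "\<And>i. i \<in> A \<Longrightarrow> square_integrable M (f i)"
  shows "square_integrable M (\<lambda>x. \<Sum>i\<in>A. f i x)"
  using assms
  by (induction A rule: infinite_finite_induct) (simp_all add: square_integrable_const square_integrable_add)

lemma square_integrable_inner:
  assumes "square_integrable M f" "square_integrable M g"
  shows "integrable M (\<lambda>x. f x \<bullet> g x)"
proof (rule Bochner_Integration.integrable_bound)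
  show "integrable M (\<lambda>x. (norm (f x))\<^sup>2 + (norm (g x))\<^sup>2)"
    using assms by (simp add: square_integrable_def)
  show "(\<lambda>x. f x \<bullet> g x) \<in> borel_measurable M"
    using assms unfolding square_integrable_def by (intro borel_measurable_inner) auto
  have "\<bar>f x \<bullet> g x\<bar> \<le> (norm (f x))\<^sup>2 + (norm (g x))\<^sup>2" for x
  proof -
    have "\<bar>f x \<bullet> g x\<bar> \<le> norm (f x) * norm (g x)" by (rule Cauchy_Schwarz_ineq2)
    moreover have "0 \<le> norm (f x) * norm (g x)" by simp
    ultimately show ?thesis
      using zero_le_power2[of "norm (f x) - norm (g x)"] unfolding power2_diff by linarith
  qed
  then show "AE x in M. norm (f x \<bullet> g x) \<le> norm ((norm (f x))\<^sup>2 + (norm (g x))\<^sup>2)"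
    by simp
qed

lemma (in prob_space) indep_var_integral_iterated:
  fixes h :: "'z \<times> 'z \<Rightarrow> real"
  assumes indep: "indep_var N1 Z N2 X"
    and h: "h \<in> borel_measurable (N1 \<Otimes>\<^sub>M N2)"
    and int: "integrable M (\<lambda>\<omega>. h (Z \<omega>, X \<omega>))"
  shows "integrable (distr M N1 Z) (\<lambda>z. \<integral>x. h (z, x) \<partial>distr M N2 X)"
    and "(\<integral>\<omega>. h (Z \<omega>, X \<omega>) \<partial>M) = (\<integral>z. (\<integral>x. h (z, x) \<partial>distr M N2 X) \<partial>distr M N1 Z)"
proof -
  have rv: "Z \<in> measurable M N1" "X \<in> measurable M N2"
    and joint: "distr M N1 Z \<Otimes>\<^sub>M distr M N2 X = distr M (N1 \<Otimes>\<^sub>M N2) (\<lambda>\<omega>. (Z \<omega>, X \<omega>))"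
    using indep unfolding indep_var_distribution_eq by auto
  interpret Z: prob_space "distr M N1 Z" by (rule prob_space_distr) (rule rv)
  interpret X: prob_space "distr M N2 X" by (rule prob_space_distr) (rule rv)
  interpret ZX: pair_sigma_finite "distr M N1 Z" "distr M N2 X" by unfold_locales
  have pair: "(\<lambda>\<omega>. (Z \<omega>, X \<omega>)) \<in> measurable M (N1 \<Otimes>\<^sub>M N2)" using rv by (rule measurable_Pair)
  have int_prod: "integrable (distr M N1 Z \<Otimes>\<^sub>M distr M N2 X) h"
    unfolding joint using integrable_distr_eq[OF pair h] int by simp
  show "integrable (distr M N1 Z) (\<lambda>z. \<integral>x. h (z, x) \<partial>distr M N2 X)"
    using ZX.integrable_fst'[OF int_prod] .
  have "(\<integral>z. (\<integral>x. h (z, x) \<partial>distr M N2 X) \<partial>distr M N1 Z) = integral\<^sup>L (distr M N1 Z \<Otimes>\<^sub>M distr M N2 X) h"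
    using ZX.integral_fst'[OF int_prod] .
  also have "\<dots> = (\<integral>\<omega>. h (Z \<omega>, X \<omega>) \<partial>M)"
    unfolding joint by (rule integral_distr[OF pair h])
  finally show "(\<integral>\<omega>. h (Z \<omega>, X \<omega>) \<partial>M) = (\<integral>z. (\<integral>x. h (z, x) \<partial>distr M N2 X) \<partial>distr M N1 Z)" ..
qed

lemma (in prob_space) integral_inner_indep_unbiased:
  fixes a b :: "'z \<Rightarrow> 'w::euclidean_space" and g :: "'w \<Rightarrow> 'x \<Rightarrow> 'w"
  assumes indep: "indep_var N1 Z N2 Y"
    and a: "a \<in> borel_measurable N1" and b: "b \<in> borel_measurable N1" and x: "x \<in> measurable N2 N"
    and g: "(\<lambda>(w, s). g w s) \<in> borel_measurable (borel \<Otimes>\<^sub>M N)"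
    and unbiased: "\<And>w. integrable (distr M N (\<lambda>\<omega>. x (Y \<omega>))) (g w) \<and>
                         (\<integral>s. g w s \<partial>distr M N (\<lambda>\<omega>. x (Y \<omega>))) = m w"
    and m: "m \<in> borel_measurable borel"
    and int: "integrable M (\<lambda>\<omega>. a (Z \<omega>) \<bullet> g (b (Z \<omega>)) (x (Y \<omega>)))"
  shows "integrable M (\<lambda>\<omega>. a (Z \<omega>) \<bullet> m (b (Z \<omega>)))"
    and "(\<integral>\<omega>. a (Z \<omega>) \<bullet> g (b (Z \<omega>)) (x (Y \<omega>)) \<partial>M) = (\<integral>\<omega>. a (Z \<omega>) \<bullet> m (b (Z \<omega>)) \<partial>M)"
proof -
  have Z: "Z \<in> measurable M N1" and Y: "Y \<in> measurable M N2"
    using indep unfolding indep_var_distribution_eq by auto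
  define h where "h zy = a (fst zy) \<bullet> g (b (fst zy)) (x (snd zy))" for zy
  have h: "h \<in> borel_measurable (N1 \<Otimes>\<^sub>M N2)"
  proof -
    have "(\<lambda>zy. (b (fst zy), x (snd zy))) \<in> measurable (N1 \<Otimes>\<^sub>M N2) (borel \<Otimes>\<^sub>M N)"
      using b x by measurable
    from measurable_compose[OF this g] a show ?thesis
      unfolding h_def by (intro borel_measurable_inner) auto
  qed
  define H where "H z = a z \<bullet> m (b z)" for z
  have H: "H \<in> borel_measurable N1"
    unfolding H_def using a b m by measurable
  have inner: "(\<integral>y. h (z, y) \<partial>distr M N2 Y) = H z" for z
  proof -
    have "(\<lambda>s. a z \<bullet> g (b z) s) \<in> borel_measurable N"
      using measurable_Pair2[OF g, of "b z"] by (intro borel_measurable_inner) auto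
    then have "(\<integral>y. h (z, y) \<partial>distr M N2 Y) = (\<integral>s. a z \<bullet> g (b z) s \<partial>distr M N (\<lambda>\<omega>. x (Y \<omega>)))"
      unfolding h_def using Y x
      by (simp add: integral_distr measurable_compose[OF Y x] measurable_compose[OF x])
    also have "\<dots> = H z"
      using unbiased[of "b z"] by (simp add: H_def)
    finally show ?thesis .
  qed
  have "integrable M (\<lambda>\<omega>. h (Z \<omega>, Y \<omega>))"
    using int by (simp add: h_def)
  note iterated = indep_var_integral_iterated[OF indep h this, unfolded inner]
  have "integrable (distr M N1 Z) H"
    using iterated(1) by simp
  then show "integrable M (\<lambda>\<omega>. a (Z \<omega>) \<bullet> m (b (Z \<omega>)))"
    using integrable_distr_eq[OF Z H] by (simp add: H_def)
  show "(\<integral>\<omega>. a (Z \<omega>) \<bullet> g (b (Z \<omega>)) (x (Y \<omega>)) \<partial>M) = (\<integral>\<omega>. a (Z \<omega>) \<bullet> m (b (Z \<omega>)) \<partial>M)"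
    using iterated(2) integral_distr[OF Z H] by (simp add: h_def H_def[abs_def])
qed

section \<open>The iterates as functions of the noise\<close>

text \<open>Reading the noise of step \<open>(s, k, i)\<close> off an abstract outcome \<open>b\<close> as \<open>Q b (s, k, i)\<close> lets the iterates be
  evaluated on noise paths as well as on the probability space; on noise paths, dependence on past noise only is a
  congruence and a measurability statement.\<close>

definition noisy_grad :: "('c \<Rightarrow> 'w \<Rightarrow> 'x \<Rightarrow> 'w) \<Rightarrow> ('b \<Rightarrow> nat \<times> nat \<times> 'c \<Rightarrow> 'x) \<Rightarrow> nat \<Rightarrow> nat \<Rightarrow> 'c \<Rightarrow> 'w \<Rightarrow> 'b \<Rightarrow> 'w"
  where "noisy_grad g Q s k i w b = g i w (Q b (s, k, i))"

lemma loc_noisy_grad_Suc: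
  "loc \<beta> \<gamma> (noisy_grad g Q) wb u s (Suc k) i b = loc \<beta> \<gamma> (noisy_grad g Q) wb u s k i b
     - \<gamma> s *\<^sub>R g i (\<beta> *\<^sub>R loc \<beta> \<gamma> (noisy_grad g Q) wb u s k i b + (1 - \<beta>) *\<^sub>R u i) (Q b (s, k, i))"
  by (simp add: noisy_grad_def)

lemma loc_noisy_grad_cong:
  assumes "\<And>j. j < k \<Longrightarrow> Q b (s, j, i) = Q' b' (s, j, i)"
  shows "loc \<beta> \<gamma> (noisy_grad g Q) wb u s k i b = loc \<beta> \<gamma> (noisy_grad g Q') wb u s k i b'"
  using assms by (induction k) (auto simp: noisy_grad_def)

lemma st_noisy_grad_cong:
  assumes "\<And>s' j n. s' < s \<Longrightarrow> j < E \<Longrightarrow> Q b (s', j, n) = Q' b' (s', j, n)"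
  shows "st p \<beta> E \<gamma> (noisy_grad g Q) w0 s b = st p \<beta> E \<gamma> (noisy_grad g Q') w0 s b'"
  using assms
proof (induction s)
  case (Suc s)
  have "st p \<beta> E \<gamma> (noisy_grad g Q) w0 s b = st p \<beta> E \<gamma> (noisy_grad g Q') w0 s b'"
    using Suc.prems by (intro Suc.IH) auto
  moreover have "loc \<beta> \<gamma> (noisy_grad g Q) wb u s E n b = loc \<beta> \<gamma> (noisy_grad g Q') wb u s E n b'" for wb u n
    using Suc.prems by (intro loc_noisy_grad_cong) auto
  ultimately show ?case by (simp add: Let_def)
qed simp

lemma loc_noisy_grad_measurable:
  fixes g :: "'c \<Rightarrow> 'w::euclidean_space \<Rightarrow> 'x \<Rightarrow> 'w"
  assumes g: "(\<lambda>(w, x). g i w x) \<in> borel_measurable (borel \<Otimes>\<^sub>M N)"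
    and wb: "wb \<in> borel_measurable P" and u: "(\<lambda>b. u b i) \<in> borel_measurable P"
    and Q: "\<And>j. j < k \<Longrightarrow> (\<lambda>b. Q b (s, j, i)) \<in> measurable P N"
  shows "(\<lambda>b. loc \<beta> \<gamma> (noisy_grad g Q) (wb b) (u b) s k i b) \<in> borel_measurable P"
  using Q
proof (induction k)
  case (Suc k)
  then have IH: "(\<lambda>b. loc \<beta> \<gamma> (noisy_grad g Q) (wb b) (u b) s k i b) \<in> borel_measurable P"
    by simp
  have "(\<lambda>b. g i (\<beta> *\<^sub>R loc \<beta> \<gamma> (noisy_grad g Q) (wb b) (u b) s k i b + (1 - \<beta>) *\<^sub>R u b i) (Q b (s, k, i)))
      \<in> borel_measurable P"
    using Suc.prems
    by (intro measurable_Pair_compose_split[OF g] borel_measurable_add borel_measurable_scaleR IH u) auto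
  with IH show ?case
    unfolding loc_noisy_grad_Suc by (intro borel_measurable_diff borel_measurable_scaleR) auto
qed (simp add: wb)

lemma st_noisy_grad_measurable:
  fixes p :: "'c::finite \<Rightarrow> 'c \<Rightarrow> real" and g :: "'c \<Rightarrow> 'w::euclidean_space \<Rightarrow> 'x \<Rightarrow> 'w"
  assumes g: "\<And>i. (\<lambda>(w, x). g i w x) \<in> borel_measurable (borel \<Otimes>\<^sub>M N)"
    and Q: "\<And>s' j n. s' < s \<Longrightarrow> j < E \<Longrightarrow> (\<lambda>b. Q b (s', j, n)) \<in> measurable P N"
  shows "(\<lambda>b. fst (st p \<beta> E \<gamma> (noisy_grad g Q) w0 s b)) \<in> borel_measurable P"
    and "(\<lambda>b. snd (st p \<beta> E \<gamma> (noisy_grad g Q) w0 s b) n) \<in> borel_measurable P"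
proof -
  have "(\<lambda>b. fst (st p \<beta> E \<gamma> (noisy_grad g Q) w0 s b)) \<in> borel_measurable P \<and>
        (\<forall>n. (\<lambda>b. snd (st p \<beta> E \<gamma> (noisy_grad g Q) w0 s b) n) \<in> borel_measurable P)"
    using Q
  proof (induction s)
    case (Suc s)
    then have IH: "(\<lambda>b. fst (st p \<beta> E \<gamma> (noisy_grad g Q) w0 s b)) \<in> borel_measurable P"
        "\<And>n. (\<lambda>b. snd (st p \<beta> E \<gamma> (noisy_grad g Q) w0 s b) n) \<in> borel_measurable P"
      by auto
    have "(\<lambda>b. loc \<beta> \<gamma> (noisy_grad g Q) (fst (st p \<beta> E \<gamma> (noisy_grad g Q) w0 s b))
              (snd (st p \<beta> E \<gamma> (noisy_grad g Q) w0 s b)) s E n b) \<in> borel_measurable P" for n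
      using Suc.prems by (intro loc_noisy_grad_measurable[OF g] IH) auto
    then show ?case
      by (simp add: Let_def)
  qed simp
  then show "(\<lambda>b. fst (st p \<beta> E \<gamma> (noisy_grad g Q) w0 s b)) \<in> borel_measurable P"
    and "(\<lambda>b. snd (st p \<beta> E \<gamma> (noisy_grad g Q) w0 s b) n) \<in> borel_measurable P"
    by auto
qed

section \<open>The perturbed algorithm\<close>

locale perturbed_fl = prob_space M
  for M :: "'a measure" and N :: "'x measure"
    and p :: "'c::finite \<Rightarrow> 'c \<Rightarrow> real"
    and g :: "'c \<Rightarrow> 'w::euclidean_space \<Rightarrow> 'x \<Rightarrow> 'w"
    and \<xi> :: "nat \<Rightarrow> nat \<Rightarrow> 'c \<Rightarrow> 'a \<Rightarrow> 'x"
    and sg :: "nat \<Rightarrow> nat \<Rightarrow> 'c \<Rightarrow> 'w \<Rightarrow> 'a \<Rightarrow> 'w"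
    and \<beta> :: real and \<gamma> :: "nat \<Rightarrow> real" and E :: nat and w0 :: 'w and G :: real +
  assumes sg_def: "sg = (\<lambda>s k i w \<omega>. g i w (\<xi> s k i \<omega>))"
    and p_nonneg: "\<And>i n. p i n \<ge> 0" and p_sym: "\<And>i n. p i n = p n i"
    and p_sum: "(\<Sum>i\<in>UNIV. \<Sum>n\<in>UNIV. p i n) = 1" and p_pos: "\<And>i. pw p i > 0"
    and g_measurable: "\<And>i. (\<lambda>(w, x). g i w x) \<in> borel_measurable (borel \<Otimes>\<^sub>M N)"
    and indep: "indep_vars (\<lambda>_. N) (\<lambda>(s, k, i). \<xi> s k i) UNIV"
    and second_moment: "\<And>s k i.
        integrable M (\<lambda>\<omega>. (norm (g i (pert \<beta> \<gamma> sg (wbar p \<beta> E \<gamma> sg w0 s \<omega>) (uanc p \<beta> E \<gamma> sg w0 s \<omega>)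
                                        s k i \<omega>) (\<xi> s k i \<omega>)))\<^sup>2) \<and>
        (\<integral>\<omega>. (norm (g i (pert \<beta> \<gamma> sg (wbar p \<beta> E \<gamma> sg w0 s \<omega>) (uanc p \<beta> E \<gamma> sg w0 s \<omega>)
                              s k i \<omega>) (\<xi> s k i \<omega>)))\<^sup>2 \<partial>M) \<le> G\<^sup>2"
begin

definition avg_iter :: "nat \<Rightarrow> 'a \<Rightarrow> 'w" where
  "avg_iter s \<omega> = wbar p \<beta> E \<gamma> sg w0 s \<omega>"

definition anchor :: "nat \<Rightarrow> 'a \<Rightarrow> 'c \<Rightarrow> 'w" where
  "anchor s \<omega> = uanc p \<beta> E \<gamma> sg w0 s \<omega>"

definition local_iter :: "nat \<Rightarrow> nat \<Rightarrow> 'c \<Rightarrow> 'a \<Rightarrow> 'w" where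
  "local_iter s k i \<omega> = loc \<beta> \<gamma> sg (avg_iter s \<omega>) (anchor s \<omega>) s k i \<omega>"

definition pert_point :: "nat \<Rightarrow> nat \<Rightarrow> 'c \<Rightarrow> 'a \<Rightarrow> 'w" where
  "pert_point s k i \<omega> = \<beta> *\<^sub>R local_iter s k i \<omega> + (1 - \<beta>) *\<^sub>R anchor s \<omega> i"

definition sample_grad :: "nat \<Rightarrow> nat \<Rightarrow> 'c \<Rightarrow> 'a \<Rightarrow> 'w" where
  "sample_grad s k i \<omega> = g i (pert_point s k i \<omega>) (\<xi> s k i \<omega>)"

text \<open>The virtual sequence of the analysis: it moves by the averaged sampled gradient with step \<open>\<beta> \<gamma> s\<close>, starts at
  \<open>avg_iter s\<close>, and \<open>avg_iter (Suc s)\<close> is an affine extrapolation of its value after \<open>E\<close> steps.\<close>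

definition virtual_iter :: "nat \<Rightarrow> nat \<Rightarrow> 'a \<Rightarrow> 'w" where
  "virtual_iter s k \<omega> = (\<Sum>i\<in>UNIV. pw p i *\<^sub>R pert_point s k i \<omega>)"

definition grad_energy :: "nat \<Rightarrow> nat \<Rightarrow> 'a \<Rightarrow> real" where
  "grad_energy s k \<omega> = (\<Sum>j<k. \<Sum>i\<in>UNIV. pw p i * (norm (sample_grad s j i \<omega>))\<^sup>2)"

definition dispersion :: "nat \<Rightarrow> nat \<Rightarrow> 'a \<Rightarrow> real" where
  "dispersion s k \<omega> = (\<Sum>i\<in>UNIV. pw p i * (norm (virtual_iter s k \<omega> - pert_point s k i \<omega>))\<^sup>2)"

lemma pw_nonneg: "pw p i \<ge> 0"
  using p_pos[of i] by simp

lemma sum_pw: "(\<Sum>i\<in>UNIV. pw p i) = 1"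
  using p_sum by (simp add: pw_def)

lemma sum_column_p: "(\<Sum>i\<in>UNIV. p i n) = pw p n"
  unfolding pw_def by (rule sum.cong[OF refl]) (rule p_sym)

lemma pert_point_eq: "pert \<beta> \<gamma> sg (avg_iter s \<omega>) (anchor s \<omega>) s k i \<omega> = pert_point s k i \<omega>"
  by (simp add: pert_def pert_point_def local_iter_def)

lemma local_iter_0: "local_iter s 0 i \<omega> = avg_iter s \<omega>"
  by (simp add: local_iter_def)

lemma local_iter_Suc: "local_iter s (Suc k) i \<omega> = local_iter s k i \<omega> - \<gamma> s *\<^sub>R sample_grad s k i \<omega>"
  by (simp add: local_iter_def sample_grad_def pert_point_def) (simp add: sg_def)

lemma avg_iter_0: "avg_iter 0 \<omega> = w0" and anchor_0: "anchor 0 \<omega> i = w0"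
  by (simp_all add: avg_iter_def anchor_def wbar_def uanc_def)

lemma avg_iter_Suc: "avg_iter (Suc s) \<omega> = (\<Sum>i\<in>UNIV. pw p i *\<^sub>R local_iter s E i \<omega>)"
  by (simp add: avg_iter_def anchor_def local_iter_def wbar_def uanc_def Let_def)

lemma anchor_Suc: "anchor (Suc s) \<omega> i = (\<Sum>n\<in>UNIV. (p i n / pw p i) *\<^sub>R local_iter s E n \<omega>)"
  by (simp add: avg_iter_def anchor_def local_iter_def wbar_def uanc_def Let_def
      scaleR_sum_right divide_inverse mult.commute)

lemma sum_pw_anchor: "(\<Sum>i\<in>UNIV. pw p i *\<^sub>R anchor s \<omega> i) = avg_iter s \<omega>"
proof (cases s)
  case 0
  then show ?thesis by (simp add: anchor_0 avg_iter_0 scaleR_sum_left[symmetric] sum_pw)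
next
  case (Suc s')
  have "(\<Sum>i\<in>UNIV. pw p i *\<^sub>R anchor s \<omega> i) = (\<Sum>i\<in>UNIV. \<Sum>n\<in>UNIV. p i n *\<^sub>R local_iter s' E n \<omega>)"
    using p_pos by (simp add: Suc anchor_Suc scaleR_sum_right less_imp_neq[OF p_pos, symmetric])
  also have "\<dots> = (\<Sum>n\<in>UNIV. pw p n *\<^sub>R local_iter s' E n \<omega>)"
    by (subst sum.swap) (simp add: scaleR_sum_left[symmetric] sum_column_p)
  finally show ?thesis by (simp add: Suc avg_iter_Suc)
qed

lemma local_iter_minus_avg: "local_iter s k i \<omega> - avg_iter s \<omega> = - \<gamma> s *\<^sub>R (\<Sum>j<k. sample_grad s j i \<omega>)"
  by (induction k) (simp_all add: local_iter_0 local_iter_Suc algebra_simps)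

lemma virtual_iter_0: "virtual_iter s 0 \<omega> = avg_iter s \<omega>"
proof -
  have "virtual_iter s 0 \<omega> = \<beta> *\<^sub>R (\<Sum>i\<in>UNIV. pw p i *\<^sub>R avg_iter s \<omega>) + (1 - \<beta>) *\<^sub>R (\<Sum>i\<in>UNIV. pw p i *\<^sub>R anchor s \<omega> i)"
    by (simp add: virtual_iter_def pert_point_def local_iter_0 scaleR_add_right scaleR_sum_right sum.distrib
        mult.commute)
  also have "\<dots> = avg_iter s \<omega>"
    by (simp add: sum_pw_anchor scaleR_sum_left[symmetric] sum_pw scaleR_left_distrib[symmetric])
  finally show ?thesis .
qed

lemma virtual_iter_Suc:
  "virtual_iter s (Suc k) \<omega> = virtual_iter s k \<omega> - (\<beta> * \<gamma> s) *\<^sub>R (\<Sum>i\<in>UNIV. pw p i *\<^sub>R sample_grad s k i \<omega>)"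
  by (simp add: virtual_iter_def pert_point_def local_iter_Suc algebra_simps scaleR_sum_right sum_subtractf sum.distrib)

lemma virtual_iter_minus_avg:
  "virtual_iter s k \<omega> - avg_iter s \<omega> = - (\<beta> * \<gamma> s) *\<^sub>R (\<Sum>j<k. \<Sum>i\<in>UNIV. pw p i *\<^sub>R sample_grad s j i \<omega>)"
  by (induction k) (simp_all add: virtual_iter_0 virtual_iter_Suc algebra_simps)

lemma avg_iter_Suc_extrapolation:
  assumes "\<beta> \<noteq> 0"
  shows "avg_iter (Suc s) \<omega> = (1 / \<beta>) *\<^sub>R virtual_iter s E \<omega> + (1 - 1 / \<beta>) *\<^sub>R avg_iter s \<omega>"
proof -
  have "virtual_iter s E \<omega>
      = \<beta> *\<^sub>R (\<Sum>i\<in>UNIV. pw p i *\<^sub>R local_iter s E i \<omega>) + (1 - \<beta>) *\<^sub>R (\<Sum>i\<in>UNIV. pw p i *\<^sub>R anchor s \<omega> i)"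
    by (simp add: virtual_iter_def pert_point_def scaleR_add_right scaleR_sum_right sum.distrib mult.commute)
  also have "\<dots> = \<beta> *\<^sub>R avg_iter (Suc s) \<omega> + (1 - \<beta>) *\<^sub>R avg_iter s \<omega>"
    by (simp only: sum_pw_anchor avg_iter_Suc)
  finally have "(1 / \<beta>) *\<^sub>R virtual_iter s E \<omega> + (1 - 1 / \<beta>) *\<^sub>R avg_iter s \<omega>
      = (1 / \<beta> * \<beta>) *\<^sub>R avg_iter (Suc s) \<omega> + (1 / \<beta> * (1 - \<beta>) + (1 - 1 / \<beta>)) *\<^sub>R avg_iter s \<omega>"
    by (simp add: scaleR_add_right scaleR_add_left)
  moreover have "1 / \<beta> * \<beta> = 1" and "1 / \<beta> * (1 - \<beta>) + (1 - 1 / \<beta>) = 0"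
    using assms by (simp_all add: field_simps)
  ultimately show ?thesis by simp
qed

lemma norm_avg_iter_Suc_minus_square:
  assumes "\<beta> \<noteq> 0"
  shows "(norm (avg_iter (Suc s) \<omega> - w))\<^sup>2 = 1 / \<beta> * (norm (virtual_iter s E \<omega> - w))\<^sup>2
    + (1 - 1 / \<beta>) * (norm (avg_iter s \<omega> - w))\<^sup>2 + (1 - \<beta>) / \<beta>\<^sup>2 * (norm (virtual_iter s E \<omega> - avg_iter s \<omega>))\<^sup>2"
proof -
  have extrapolation: "avg_iter (Suc s) \<omega> - w = (1 / \<beta>) *\<^sub>R (virtual_iter s E \<omega> - w) + (1 - 1 / \<beta>) *\<^sub>R (avg_iter s \<omega> - w)"
    using assms by (simp add: avg_iter_Suc_extrapolation algebra_simps)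
  have affine: "(norm ((1 / \<beta>) *\<^sub>R (virtual_iter s E \<omega> - w) + (1 - 1 / \<beta>) *\<^sub>R (avg_iter s \<omega> - w)))\<^sup>2
      = 1 / \<beta> * (norm (virtual_iter s E \<omega> - w))\<^sup>2 + (1 - 1 / \<beta>) * (norm (avg_iter s \<omega> - w))\<^sup>2
        - 1 / \<beta> * (1 - 1 / \<beta>) * (norm ((virtual_iter s E \<omega> - w) - (avg_iter s \<omega> - w)))\<^sup>2"
    by (rule norm_affine_combination_square) simp
  have coefficient: "1 / \<beta> * (1 - 1 / \<beta>) = - ((1 - \<beta>) / \<beta>\<^sup>2)"
    using assms by (simp add: field_simps power2_eq_square)
  show ?thesis
    unfolding extrapolation affine coefficient by simp
qed

definition noise :: "'a \<Rightarrow> nat \<times> nat \<times> 'c \<Rightarrow> 'x" where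
  "noise \<omega> = (\<lambda>(s, k, i). \<xi> s k i \<omega>)"

lemma sg_noisy_grad: "sg = noisy_grad g noise"
  by (simp add: sg_def noisy_grad_def noise_def fun_eq_iff)

lemma loc_noisy_grad: "loc \<beta> \<gamma> sg = loc \<beta> \<gamma> (noisy_grad g noise)"
  and st_noisy_grad: "st p \<beta> E \<gamma> sg w0 = st p \<beta> E \<gamma> (noisy_grad g noise) w0"
  by (simp_all add: sg_noisy_grad)

lemma \<xi>_measurable: "\<xi> s k i \<in> measurable M N"
  using indep unfolding indep_vars_def by (metis (no_types, lifting) UNIV_I case_prod_conv)

lemma noise_measurable: "(\<lambda>\<omega>. noise \<omega> idx) \<in> measurable M N"
  using \<xi>_measurable by (cases idx) (simp add: noise_def)

lemma avg_iter_measurable: "avg_iter s \<in> borel_measurable M"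
  unfolding avg_iter_def[abs_def] wbar_def st_noisy_grad
  by (rule st_noisy_grad_measurable(1)[OF g_measurable noise_measurable])

lemma anchor_measurable: "(\<lambda>\<omega>. anchor s \<omega> i) \<in> borel_measurable M"
  unfolding anchor_def uanc_def st_noisy_grad
  by (rule st_noisy_grad_measurable(2)[OF g_measurable noise_measurable])

lemma local_iter_measurable: "local_iter s k i \<in> borel_measurable M"
  unfolding local_iter_def[abs_def] loc_noisy_grad
  by (intro loc_noisy_grad_measurable[OF g_measurable] avg_iter_measurable anchor_measurable noise_measurable)

lemma pert_point_measurable: "pert_point s k i \<in> borel_measurable M"
  unfolding pert_point_def[abs_def] using local_iter_measurable anchor_measurable by measurable

lemma sample_grad_measurable: "sample_grad s k i \<in> borel_measurable M"
  unfolding sample_grad_def[abs_def]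
  by (rule measurable_Pair_compose_split[OF g_measurable pert_point_measurable \<xi>_measurable])

lemma sample_grad_second_moment: "(\<integral>\<omega>. (norm (sample_grad s k i \<omega>))\<^sup>2 \<partial>M) \<le> G\<^sup>2"
  using second_moment[of i s k] by (simp add: sample_grad_def pert_point_eq[symmetric] avg_iter_def anchor_def)

lemma sample_grad_square_integrable: "square_integrable M (sample_grad s k i)"
  using second_moment[of i s k] sample_grad_measurable
  by (simp add: square_integrable_def sample_grad_def pert_point_eq[symmetric] avg_iter_def anchor_def)

lemma local_iter_square_integrable_if:
  assumes "square_integrable M (avg_iter s)"
  shows "square_integrable M (local_iter s k i)"
proof (induction k)
  case 0
  then show ?case using assms by (simp add: local_iter_0[abs_def])
next
  case (Suc k)
  then show ?case unfolding local_iter_Suc[abs_def]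
    by (intro square_integrable_diff square_integrable_scaleR sample_grad_square_integrable)
qed

lemma avg_iter_anchor_square_integrable:
  "square_integrable M (avg_iter s) \<and> (\<forall>i. square_integrable M (\<lambda>\<omega>. anchor s \<omega> i))"
proof (induction s)
  case 0
  then show ?case by (simp add: avg_iter_0[abs_def] anchor_0 square_integrable_const)
next
  case (Suc s)
  then have "square_integrable M (local_iter s E n)" for n
    using local_iter_square_integrable_if by blast
  then show ?case unfolding avg_iter_Suc[abs_def] anchor_Suc
    by (intro conjI allI square_integrable_sum square_integrable_scaleR)
qed

lemma avg_iter_square_integrable: "square_integrable M (avg_iter s)"
  and anchor_square_integrable: "square_integrable M (\<lambda>\<omega>. anchor s \<omega> i)"
  using avg_iter_anchor_square_integrable by blast+

lemma local_iter_square_integrable: "square_integrable M (local_iter s k i)"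
  by (rule local_iter_square_integrable_if[OF avg_iter_square_integrable])

lemma pert_point_square_integrable: "square_integrable M (pert_point s k i)"
  unfolding pert_point_def[abs_def]
  by (intro square_integrable_add square_integrable_scaleR local_iter_square_integrable anchor_square_integrable)

lemma virtual_iter_square_integrable: "square_integrable M (virtual_iter s k)"
  unfolding virtual_iter_def[abs_def]
  by (intro square_integrable_sum square_integrable_scaleR pert_point_square_integrable)

lemma norm_weighted_sum_square_le:
  fixes z :: "'c \<Rightarrow> 'b::real_inner"
  shows "(norm (\<Sum>i\<in>UNIV. pw p i *\<^sub>R z i))\<^sup>2 \<le> (\<Sum>i\<in>UNIV. pw p i * (norm (z i))\<^sup>2)"
  using norm_weighted_mean_dist_square_le[of "pw p" UNIV z 0] sum_pw pw_nonneg by simp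

lemma integrable_weighted_norm_square:
  assumes "\<And>i. square_integrable M (f i)"
  shows "integrable M (\<lambda>\<omega>. \<Sum>i\<in>UNIV. pw p i * (norm (f i \<omega>))\<^sup>2)"
  using square_integrable_norm_square[OF assms] by simp

lemma grad_energy_integrable: "integrable M (grad_energy s k)"
  unfolding grad_energy_def[abs_def]
  using integrable_weighted_norm_square[OF sample_grad_square_integrable] by simp

lemma integral_grad_energy_le: "(\<integral>\<omega>. grad_energy s k \<omega> \<partial>M) \<le> real k * G\<^sup>2"
proof -
  have "(\<integral>\<omega>. grad_energy s k \<omega> \<partial>M) = (\<Sum>j<k. \<Sum>i\<in>UNIV. pw p i * (\<integral>\<omega>. (norm (sample_grad s j i \<omega>))\<^sup>2 \<partial>M))"
    unfolding grad_energy_def using square_integrable_norm_square[OF sample_grad_square_integrable]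
    by (simp add: Bochner_Integration.integral_sum integrable_sum)
  also have "\<dots> \<le> (\<Sum>j<k. \<Sum>i\<in>UNIV. pw p i * G\<^sup>2)"
    by (intro sum_mono mult_left_mono sample_grad_second_moment pw_nonneg)
  also have "\<dots> = real k * G\<^sup>2"
    by (simp add: sum_distrib_right[symmetric] sum_pw)
  finally show ?thesis .
qed

definition local_drift :: "nat \<Rightarrow> nat \<Rightarrow> 'a \<Rightarrow> real" where
  "local_drift s k \<omega> = (\<Sum>i\<in>UNIV. pw p i * (norm (local_iter s k i \<omega> - avg_iter s \<omega>))\<^sup>2)"

definition anchor_spread :: "nat \<Rightarrow> 'a \<Rightarrow> real" where
  "anchor_spread s \<omega> = (\<Sum>i\<in>UNIV. pw p i * (norm (anchor s \<omega> i - avg_iter s \<omega>))\<^sup>2)"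

lemma integrable_local_drift: "integrable M (local_drift s k)"
  and integrable_anchor_spread: "integrable M (anchor_spread s)"
  and integrable_dispersion: "integrable M (dispersion s k)"
  unfolding local_drift_def[abs_def] anchor_spread_def[abs_def] dispersion_def[abs_def]
  by (intro integrable_weighted_norm_square square_integrable_diff local_iter_square_integrable
      anchor_square_integrable avg_iter_square_integrable virtual_iter_square_integrable
      pert_point_square_integrable)+

lemma local_drift_le: "local_drift s k \<omega> \<le> (\<gamma> s)\<^sup>2 * real k * grad_energy s k \<omega>"
proof -
  have "(norm (local_iter s k i \<omega> - avg_iter s \<omega>))\<^sup>2 \<le> (\<gamma> s)\<^sup>2 * (real k * (\<Sum>j<k. (norm (sample_grad s j i \<omega>))\<^sup>2))" for i
    unfolding local_iter_minus_avg
    using norm_sum_square_le_card[of "\<lambda>j. sample_grad s j i \<omega>" "{..<k}"]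
    by (simp add: power_mult_distrib mult_left_mono)
  then have "local_drift s k \<omega> \<le> (\<Sum>i\<in>UNIV. pw p i * ((\<gamma> s)\<^sup>2 * (real k * (\<Sum>j<k. (norm (sample_grad s j i \<omega>))\<^sup>2))))"
    unfolding local_drift_def by (intro sum_mono mult_left_mono pw_nonneg)
  also have "\<dots> = (\<gamma> s)\<^sup>2 * real k * (\<Sum>i\<in>UNIV. \<Sum>j<k. pw p i * (norm (sample_grad s j i \<omega>))\<^sup>2)"
    by (simp add: sum_distrib_left mult_ac)
  also have "(\<Sum>i\<in>UNIV. \<Sum>j<k. pw p i * (norm (sample_grad s j i \<omega>))\<^sup>2) = grad_energy s k \<omega>"
    unfolding grad_energy_def by (rule sum.swap)
  finally show ?thesis .
qed

lemma virtual_drift_le: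
  "(norm (virtual_iter s k \<omega> - avg_iter s \<omega>))\<^sup>2 \<le> (\<beta> * \<gamma> s)\<^sup>2 * real k * grad_energy s k \<omega>"
proof -
  have "(norm (virtual_iter s k \<omega> - avg_iter s \<omega>))\<^sup>2
      \<le> (\<beta> * \<gamma> s)\<^sup>2 * (real k * (\<Sum>j<k. (norm (\<Sum>i\<in>UNIV. pw p i *\<^sub>R sample_grad s j i \<omega>))\<^sup>2))"
    unfolding virtual_iter_minus_avg
    using norm_sum_square_le_card[of "\<lambda>j. \<Sum>i\<in>UNIV. pw p i *\<^sub>R sample_grad s j i \<omega>" "{..<k}"]
    by (simp add: power_mult_distrib mult_left_mono)
  also have "\<dots> \<le> (\<beta> * \<gamma> s)\<^sup>2 * (real k * grad_energy s k \<omega>)"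
    unfolding grad_energy_def by (intro mult_left_mono sum_mono norm_weighted_sum_square_le) simp_all
  finally show ?thesis by simp
qed

text \<open>Each anchor is a \<open>p\<close>-weighted mean of the previous round's local iterates, so the anchors spread no more than
  those iterates drifted.\<close>

lemma anchor_spread_Suc_le: "anchor_spread (Suc s) \<omega> \<le> (\<gamma> s)\<^sup>2 * real E * grad_energy s E \<omega>"
proof -
  have "anchor_spread (Suc s) \<omega> \<le> (\<Sum>i\<in>UNIV. pw p i * (norm (anchor (Suc s) \<omega> i - avg_iter s \<omega>))\<^sup>2)"
    using weighted_dist_square_mean_le[of "pw p" UNIV "anchor (Suc s) \<omega>" "avg_iter s \<omega>"] sum_pw
    by (simp add: anchor_spread_def sum_pw_anchor)
  also have "\<dots> \<le> (\<Sum>i\<in>UNIV. pw p i * (\<Sum>n\<in>UNIV. (p i n / pw p i) * (norm (local_iter s E n \<omega> - avg_iter s \<omega>))\<^sup>2))"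
  proof (intro sum_mono mult_left_mono pw_nonneg)
    fix i
    have "(\<Sum>n\<in>UNIV. p i n / pw p i) = 1"
      using p_pos[of i] by (simp add: sum_divide_distrib[symmetric] pw_def)
    then show "(norm (anchor (Suc s) \<omega> i - avg_iter s \<omega>))\<^sup>2
        \<le> (\<Sum>n\<in>UNIV. (p i n / pw p i) * (norm (local_iter s E n \<omega> - avg_iter s \<omega>))\<^sup>2)"
      unfolding anchor_Suc using p_nonneg p_pos[of i]
      by (intro norm_weighted_mean_dist_square_le) auto
  qed
  also have "\<dots> = (\<Sum>n\<in>UNIV. \<Sum>i\<in>UNIV. p i n * (norm (local_iter s E n \<omega> - avg_iter s \<omega>))\<^sup>2)"
    using p_pos by (subst sum.swap) (simp add: sum_distrib_left less_imp_neq[OF p_pos, symmetric])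
  also have "\<dots> = local_drift s E \<omega>"
    by (simp add: local_drift_def sum_distrib_right[symmetric] sum_column_p)
  also have "\<dots> \<le> (\<gamma> s)\<^sup>2 * real E * grad_energy s E \<omega>"
    by (rule local_drift_le)
  finally show ?thesis .
qed

lemma dispersion_le: "dispersion s k \<omega> \<le> 2 * \<beta>\<^sup>2 * local_drift s k \<omega> + 2 * (1 - \<beta>)\<^sup>2 * anchor_spread s \<omega>"
proof -
  have "dispersion s k \<omega> \<le> (\<Sum>i\<in>UNIV. pw p i * (norm (pert_point s k i \<omega> - avg_iter s \<omega>))\<^sup>2)"
    using weighted_dist_square_mean_le[of "pw p" UNIV "\<lambda>i. pert_point s k i \<omega>" "avg_iter s \<omega>"] sum_pw
    by (simp add: dispersion_def virtual_iter_def norm_minus_commute)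
  also have "\<dots> \<le> (\<Sum>i\<in>UNIV. pw p i * (2 * \<beta>\<^sup>2 * (norm (local_iter s k i \<omega> - avg_iter s \<omega>))\<^sup>2
      + 2 * (1 - \<beta>)\<^sup>2 * (norm (anchor s \<omega> i - avg_iter s \<omega>))\<^sup>2))"
  proof (intro sum_mono mult_left_mono pw_nonneg)
    fix i
    have "pert_point s k i \<omega> - avg_iter s \<omega>
        = \<beta> *\<^sub>R (local_iter s k i \<omega> - avg_iter s \<omega>) + (1 - \<beta>) *\<^sub>R (anchor s \<omega> i - avg_iter s \<omega>)"
      by (simp add: pert_point_def algebra_simps)
    then show "(norm (pert_point s k i \<omega> - avg_iter s \<omega>))\<^sup>2 \<le> 2 * \<beta>\<^sup>2 * (norm (local_iter s k i \<omega> - avg_iter s \<omega>))\<^sup>2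
        + 2 * (1 - \<beta>)\<^sup>2 * (norm (anchor s \<omega> i - avg_iter s \<omega>))\<^sup>2"
      using norm_add_square_le[of "\<beta> *\<^sub>R (local_iter s k i \<omega> - avg_iter s \<omega>)"
          "(1 - \<beta>) *\<^sub>R (anchor s \<omega> i - avg_iter s \<omega>)"]
      by (simp add: power_mult_distrib)
  qed
  also have "\<dots> = 2 * \<beta>\<^sup>2 * local_drift s k \<omega> + 2 * (1 - \<beta>)\<^sup>2 * anchor_spread s \<omega>"
    by (simp add: local_drift_def anchor_spread_def sum.distrib sum_distrib_left algebra_simps)
  finally show ?thesis .
qed

lemma integral_local_drift_le:
  assumes "k \<le> E"
  shows "(\<integral>\<omega>. local_drift s k \<omega> \<partial>M) \<le> (\<gamma> s)\<^sup>2 * (real E)\<^sup>2 * G\<^sup>2"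
proof -
  have "(\<integral>\<omega>. local_drift s k \<omega> \<partial>M) \<le> (\<integral>\<omega>. (\<gamma> s)\<^sup>2 * real k * grad_energy s k \<omega> \<partial>M)"
    using integrable_local_drift grad_energy_integrable by (intro integral_mono local_drift_le) auto
  also have "\<dots> \<le> (\<gamma> s)\<^sup>2 * real k * (real k * G\<^sup>2)"
    by (simp add: mult_left_mono integral_grad_energy_le)
  also have "\<dots> = ((\<gamma> s)\<^sup>2 * G\<^sup>2) * (real k)\<^sup>2"
    by (simp add: power2_eq_square)
  also have "\<dots> \<le> ((\<gamma> s)\<^sup>2 * G\<^sup>2) * (real E)\<^sup>2"
    using assms by (intro mult_left_mono power_mono) simp_all
  finally show ?thesis by (simp add: mult_ac)
qed

lemma integral_anchor_spread_le:
  "(\<integral>\<omega>. anchor_spread t \<omega> \<partial>M) \<le> (if t \<ge> 1 then (\<gamma> (t - 1))\<^sup>2 else 0) * (real E)\<^sup>2 * G\<^sup>2"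
proof (cases t)
  case 0
  then show ?thesis by (simp add: anchor_spread_def anchor_0 avg_iter_0)
next
  case (Suc s)
  have "(\<integral>\<omega>. anchor_spread (Suc s) \<omega> \<partial>M) \<le> (\<integral>\<omega>. (\<gamma> s)\<^sup>2 * real E * grad_energy s E \<omega> \<partial>M)"
    using integrable_anchor_spread grad_energy_integrable by (intro integral_mono anchor_spread_Suc_le) auto
  also have "\<dots> \<le> (\<gamma> s)\<^sup>2 * real E * (real E * G\<^sup>2)"
    by (simp add: mult_left_mono integral_grad_energy_le)
  finally show ?thesis by (simp add: Suc power2_eq_square algebra_simps)
qed

definition dispersion_bound :: "nat \<Rightarrow> real" where
  "dispersion_bound t = 2 * \<beta>\<^sup>2 * (\<gamma> t)\<^sup>2 * (real E)\<^sup>2 * G\<^sup>2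
     + 2 * (1 - \<beta>)\<^sup>2 * (if t \<ge> 1 then (\<gamma> (t - 1))\<^sup>2 else 0) * (real E)\<^sup>2 * G\<^sup>2"

lemma dispersion_bound_nonneg: "dispersion_bound t \<ge> 0"
  by (simp add: dispersion_bound_def)

lemma integral_dispersion_le:
  assumes "k \<le> E"
  shows "(\<integral>\<omega>. dispersion t k \<omega> \<partial>M) \<le> dispersion_bound t"
proof -
  have "(\<integral>\<omega>. dispersion t k \<omega> \<partial>M) \<le> (\<integral>\<omega>. 2 * \<beta>\<^sup>2 * local_drift t k \<omega> + 2 * (1 - \<beta>)\<^sup>2 * anchor_spread t \<omega> \<partial>M)"
    using integrable_dispersion integrable_local_drift integrable_anchor_spread
    by (intro integral_mono dispersion_le) auto
  also have "\<dots> = 2 * \<beta>\<^sup>2 * (\<integral>\<omega>. local_drift t k \<omega> \<partial>M) + 2 * (1 - \<beta>)\<^sup>2 * (\<integral>\<omega>. anchor_spread t \<omega> \<partial>M)"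
    using integrable_local_drift integrable_anchor_spread by simp
  also have "\<dots> \<le> 2 * \<beta>\<^sup>2 * ((\<gamma> t)\<^sup>2 * (real E)\<^sup>2 * G\<^sup>2)
      + 2 * (1 - \<beta>)\<^sup>2 * ((if t \<ge> 1 then (\<gamma> (t - 1))\<^sup>2 else 0) * (real E)\<^sup>2 * G\<^sup>2)"
    using assms by (intro add_mono mult_left_mono integral_local_drift_le integral_anchor_spread_le) simp_all
  finally show ?thesis
    unfolding dispersion_bound_def by (simp add: mult.assoc)
qed

lemma integral_virtual_drift_le:
  "(\<integral>\<omega>. (norm (virtual_iter s k \<omega> - avg_iter s \<omega>))\<^sup>2 \<partial>M) \<le> (\<beta> * \<gamma> s)\<^sup>2 * (real k)\<^sup>2 * G\<^sup>2"
proof -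
  have "(\<integral>\<omega>. (norm (virtual_iter s k \<omega> - avg_iter s \<omega>))\<^sup>2 \<partial>M) \<le> (\<integral>\<omega>. (\<beta> * \<gamma> s)\<^sup>2 * real k * grad_energy s k \<omega> \<partial>M)"
    using square_integrable_norm_square[OF
        square_integrable_diff[OF virtual_iter_square_integrable avg_iter_square_integrable]]
      grad_energy_integrable
    by (intro integral_mono virtual_drift_le) auto
  also have "\<dots> \<le> (\<beta> * \<gamma> s)\<^sup>2 * real k * (real k * G\<^sup>2)"
    by (simp add: mult_left_mono integral_grad_energy_le)
  finally show ?thesis by (simp add: power2_eq_square mult_ac)
qed

lemma integral_norm_weighted_sample_grad_le:
  "(\<integral>\<omega>. (norm (\<Sum>i\<in>UNIV. pw p i *\<^sub>R sample_grad s k i \<omega>))\<^sup>2 \<partial>M) \<le> G\<^sup>2"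
proof -
  have "square_integrable M (\<lambda>\<omega>. \<Sum>i\<in>UNIV. pw p i *\<^sub>R sample_grad s k i \<omega>)"
    by (intro square_integrable_sum square_integrable_scaleR sample_grad_square_integrable)
  then have "(\<integral>\<omega>. (norm (\<Sum>i\<in>UNIV. pw p i *\<^sub>R sample_grad s k i \<omega>))\<^sup>2 \<partial>M)
      \<le> (\<integral>\<omega>. (\<Sum>i\<in>UNIV. pw p i * (norm (sample_grad s k i \<omega>))\<^sup>2) \<partial>M)"
    using integrable_weighted_norm_square[OF sample_grad_square_integrable]
    by (intro integral_mono norm_weighted_sum_square_le square_integrable_norm_square)
  also have "\<dots> = (\<Sum>i\<in>UNIV. pw p i * (\<integral>\<omega>. (norm (sample_grad s k i \<omega>))\<^sup>2 \<partial>M))"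
    using square_integrable_norm_square[OF sample_grad_square_integrable]
    by (simp add: Bochner_Integration.integral_sum integrable_sum)
  also have "\<dots> \<le> (\<Sum>i\<in>UNIV. pw p i * G\<^sup>2)"
    by (intro sum_mono mult_left_mono sample_grad_second_moment pw_nonneg)
  finally show ?thesis by (simp add: sum_distrib_right[symmetric] sum_pw)
qed

definition past :: "nat \<Rightarrow> nat \<Rightarrow> (nat \<times> nat \<times> 'c) set" where
  "past t k = {(s, j, n). s < t \<or> (s = t \<and> j < k)}"

lemma indep_past_current_noise:
  "indep_var (PiM (past t k) (\<lambda>_. N)) (\<lambda>\<omega>. restrict (noise \<omega>) (past t k))
             (PiM {(t, k, i)} (\<lambda>_. N)) (\<lambda>\<omega>. restrict (noise \<omega>) {(t, k, i)})"
proof -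
  have "(\<lambda>\<omega>. restrict (noise \<omega>) A) = (\<lambda>\<omega>. \<lambda>idx\<in>A. (\<lambda>(s, k, i). \<xi> s k i) idx \<omega>)" for A
    by (auto simp: noise_def fun_eq_iff split: prod.split)
  then show ?thesis
    by (simp only:) (rule indep_var_restrict[OF indep], auto simp: past_def)
qed

lemma iterates_factor_through_past:
  obtains V Y where "V \<in> borel_measurable (PiM (past t k) (\<lambda>_. N))"
    and "\<And>i. Y i \<in> borel_measurable (PiM (past t k) (\<lambda>_. N))"
    and "\<And>\<omega>. virtual_iter t k \<omega> = V (restrict (noise \<omega>) (past t k))"
    and "\<And>i \<omega>. pert_point t k i \<omega> = Y i (restrict (noise \<omega>) (past t k))"
proof -
  let ?P = "PiM (past t k) (\<lambda>_. N)"
  let ?sgz = "noisy_grad g (\<lambda>z. z)"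
  define W where "W z = fst (st p \<beta> E \<gamma> ?sgz w0 t z)" for z
  define U where "U z = snd (st p \<beta> E \<gamma> ?sgz w0 t z)" for z
  define Y where "Y i z = \<beta> *\<^sub>R loc \<beta> \<gamma> ?sgz (W z) (U z) t k i z + (1 - \<beta>) *\<^sub>R U z i" for i z
  define V where "V z = (\<Sum>i\<in>UNIV. pw p i *\<^sub>R Y i z)" for z
  have component: "(\<lambda>z. z idx) \<in> measurable ?P N" if "idx \<in> past t k" for idx
    using that by (rule measurable_component_singleton)
  have W: "W \<in> borel_measurable ?P" and U: "(\<lambda>z. U z i) \<in> borel_measurable ?P" for i
    unfolding W_def[abs_def] U_def
    by (intro st_noisy_grad_measurable[OF g_measurable] component; simp add: past_def)+
  have Y: "Y i \<in> borel_measurable ?P" for i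
    unfolding Y_def[abs_def]
    by (intro borel_measurable_add borel_measurable_scaleR borel_measurable_const U
        loc_noisy_grad_measurable[OF g_measurable W U] component) (simp add: past_def)
  have "st p \<beta> E \<gamma> ?sgz w0 t (restrict (noise \<omega>) (past t k)) = st p \<beta> E \<gamma> sg w0 t \<omega>" for \<omega>
    unfolding st_noisy_grad by (rule st_noisy_grad_cong) (simp add: past_def)
  moreover have "loc \<beta> \<gamma> ?sgz wb u t k i (restrict (noise \<omega>) (past t k)) = loc \<beta> \<gamma> sg wb u t k i \<omega>" for wb u i \<omega>
    unfolding loc_noisy_grad by (rule loc_noisy_grad_cong) (simp add: past_def)
  ultimately have "pert_point t k i \<omega> = Y i (restrict (noise \<omega>) (past t k))" for i \<omega>
    by (simp add: Y_def W_def U_def pert_point_def local_iter_def avg_iter_def anchor_def wbar_def uanc_def)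
  moreover from this have "virtual_iter t k \<omega> = V (restrict (noise \<omega>) (past t k))" for \<omega>
    by (simp add: virtual_iter_def V_def)
  moreover have "V \<in> borel_measurable ?P"
    unfolding V_def[abs_def] by (intro borel_measurable_sum borel_measurable_scaleR borel_measurable_const Y)
  ultimately show ?thesis using Y that by blast
qed

end

section \<open>Descent of the virtual sequence\<close>

locale perturbed_fl_convex = perturbed_fl M N p g \<xi> sg \<beta> \<gamma> E w0 G
  for M N p and g :: "'c::finite \<Rightarrow> 'w::euclidean_space \<Rightarrow> 'x \<Rightarrow> 'w" and \<xi> sg \<beta> \<gamma> E w0 G +
  fixes F :: "'c \<Rightarrow> 'w \<Rightarrow> real" and dF :: "'c \<Rightarrow> 'w \<Rightarrow> 'w" and L \<mu> :: real and ws :: 'w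
  assumes smooth: "\<And>i. L_smooth L (F i) (dF i)"
    and sconv: "\<And>i. strongly_convex \<mu> (F i)" and \<mu>_nonneg: "\<mu> \<ge> 0"
    and ws_min: "\<And>w. (\<Sum>i\<in>UNIV. pw p i * F i ws) \<le> (\<Sum>i\<in>UNIV. pw p i * F i w)"
    and unbiased: "\<And>s k i w. integrable (distr M N (\<xi> s k i)) (g i w) \<and>
                      (\<integral>x. g i w x \<partial>distr M N (\<xi> s k i)) = dF i w"
begin

lemma L_nonneg: "L \<ge> 0"
  using L_smooth_nonneg[OF smooth] .

lemma integral_inner_sample_grad:
  shows "integrable M (\<lambda>\<omega>. (virtual_iter t k \<omega> - ws) \<bullet> dF i (pert_point t k i \<omega>))"
    and "(\<integral>\<omega>. (virtual_iter t k \<omega> - ws) \<bullet> sample_grad t k i \<omega> \<partial>M)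
       = (\<integral>\<omega>. (virtual_iter t k \<omega> - ws) \<bullet> dF i (pert_point t k i \<omega>) \<partial>M)"
proof -
  obtain V Y where V: "V \<in> borel_measurable (PiM (past t k) (\<lambda>_. N))"
    and Y: "Y i \<in> borel_measurable (PiM (past t k) (\<lambda>_. N))"
    and V_eq: "\<And>\<omega>. virtual_iter t k \<omega> = V (restrict (noise \<omega>) (past t k))"
    and Y_eq: "\<And>\<omega>. pert_point t k i \<omega> = Y i (restrict (noise \<omega>) (past t k))"
    by (rule iterates_factor_through_past) blast
  have current: "(\<lambda>z. z (t, k, i)) \<in> measurable (PiM {(t, k, i)} (\<lambda>_. N)) N"
    by (rule measurable_component_singleton) simp
  have sample: "restrict (noise \<omega>) {(t, k, i)} (t, k, i) = \<xi> t k i \<omega>" for \<omega>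
    by (simp add: noise_def)
  have "integrable M (\<lambda>\<omega>. (virtual_iter t k \<omega> - ws) \<bullet> sample_grad t k i \<omega>)"
    by (intro square_integrable_inner square_integrable_diff virtual_iter_square_integrable
        square_integrable_const sample_grad_square_integrable)
  then have int: "integrable M (\<lambda>\<omega>. (virtual_iter t k \<omega> - ws) \<bullet> g i (pert_point t k i \<omega>) (\<xi> t k i \<omega>))"
    by (simp add: sample_grad_def)
  note indep_unbiased = integral_inner_indep_unbiased[OF indep_past_current_noise
      borel_measurable_diff[OF V borel_measurable_const] Y current g_measurable _
      borel_measurable_continuous_onI[OF L_smooth_continuous_grad[OF smooth]],
      unfolded sample, OF unbiased, folded V_eq Y_eq]
  from indep_unbiased(1)[OF int] indep_unbiased(2)[OF int]
  show "integrable M (\<lambda>\<omega>. (virtual_iter t k \<omega> - ws) \<bullet> dF i (pert_point t k i \<omega>))"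
    and "(\<integral>\<omega>. (virtual_iter t k \<omega> - ws) \<bullet> sample_grad t k i \<omega> \<partial>M)
       = (\<integral>\<omega>. (virtual_iter t k \<omega> - ws) \<bullet> dF i (pert_point t k i \<omega>) \<partial>M)"
    by (simp_all add: sample_grad_def)
qed

lemma weighted_inner_grad_lower_bound:
  "\<mu> / 2 * (norm (virtual_iter t k \<omega> - ws))\<^sup>2 - L * dispersion t k \<omega>
     \<le> (\<Sum>i\<in>UNIV. pw p i * ((virtual_iter t k \<omega> - ws) \<bullet> dF i (pert_point t k i \<omega>)))"
proof -
  let ?v = "virtual_iter t k \<omega>" and ?y = "\<lambda>i. pert_point t k i \<omega>"
  have "(\<Sum>i\<in>UNIV. pw p i * (F i ?v - F i ws + \<mu> / 2 * (norm (?y i - ws))\<^sup>2 - L * (norm (?v - ?y i))\<^sup>2))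
      \<le> (\<Sum>i\<in>UNIV. pw p i * ((?v - ws) \<bullet> dF i (?y i)))"
    by (intro sum_mono mult_left_mono inner_grad_lower_bound smooth sconv pw_nonneg)
  moreover have "(\<Sum>i\<in>UNIV. pw p i * (F i ?v - F i ws + \<mu> / 2 * (norm (?y i - ws))\<^sup>2 - L * (norm (?v - ?y i))\<^sup>2))
      = ((\<Sum>i\<in>UNIV. pw p i * F i ?v) - (\<Sum>i\<in>UNIV. pw p i * F i ws))
        + \<mu> / 2 * (\<Sum>i\<in>UNIV. pw p i * (norm (?y i - ws))\<^sup>2) - L * dispersion t k \<omega>"
    by (simp add: dispersion_def algebra_simps sum.distrib sum_subtractf sum_distrib_left)
  moreover have "(\<Sum>i\<in>UNIV. pw p i * F i ws) \<le> (\<Sum>i\<in>UNIV. pw p i * F i ?v)"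
    by (rule ws_min)
  moreover have "\<mu> / 2 * (norm (?v - ws))\<^sup>2 \<le> \<mu> / 2 * (\<Sum>i\<in>UNIV. pw p i * (norm (?y i - ws))\<^sup>2)"
    using norm_weighted_mean_dist_square_le[of "pw p" UNIV ?y ws] sum_pw pw_nonneg \<mu>_nonneg
    by (intro mult_left_mono) (simp_all add: virtual_iter_def)
  ultimately show ?thesis by linarith
qed

lemma integral_weighted_inner_sample_grad_ge:
  "\<mu> / 2 * (\<integral>\<omega>. (norm (virtual_iter t k \<omega> - ws))\<^sup>2 \<partial>M) - L * (\<integral>\<omega>. dispersion t k \<omega> \<partial>M)
     \<le> (\<Sum>i\<in>UNIV. pw p i * (\<integral>\<omega>. (virtual_iter t k \<omega> - ws) \<bullet> sample_grad t k i \<omega> \<partial>M))"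
proof -
  have sq: "integrable M (\<lambda>\<omega>. (norm (virtual_iter t k \<omega> - ws))\<^sup>2)"
    by (intro square_integrable_norm_square square_integrable_diff virtual_iter_square_integrable
        square_integrable_const)
  have "\<mu> / 2 * (\<integral>\<omega>. (norm (virtual_iter t k \<omega> - ws))\<^sup>2 \<partial>M) - L * (\<integral>\<omega>. dispersion t k \<omega> \<partial>M)
      = (\<integral>\<omega>. \<mu> / 2 * (norm (virtual_iter t k \<omega> - ws))\<^sup>2 - L * dispersion t k \<omega> \<partial>M)"
    using sq integrable_dispersion by simp
  also have "\<dots> \<le> (\<integral>\<omega>. (\<Sum>i\<in>UNIV. pw p i * ((virtual_iter t k \<omega> - ws) \<bullet> dF i (pert_point t k i \<omega>))) \<partial>M)"
    using sq integrable_dispersion integral_inner_sample_grad(1)[of t k]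
    by (intro integral_mono weighted_inner_grad_lower_bound) auto
  also have "\<dots> = (\<Sum>i\<in>UNIV. pw p i * (\<integral>\<omega>. (virtual_iter t k \<omega> - ws) \<bullet> sample_grad t k i \<omega> \<partial>M))"
    using integral_inner_sample_grad[of t k] by (simp add: Bochner_Integration.integral_sum integrable_sum)
  finally show ?thesis .
qed

lemma integral_virtual_iter_Suc_le:
  assumes "\<beta> * \<gamma> t \<ge> 0"
  shows "(\<integral>\<omega>. (norm (virtual_iter t (Suc k) \<omega> - ws))\<^sup>2 \<partial>M)
    \<le> (1 - \<mu> * (\<beta> * \<gamma> t)) * (\<integral>\<omega>. (norm (virtual_iter t k \<omega> - ws))\<^sup>2 \<partial>M)
      + 2 * (\<beta> * \<gamma> t) * L * (\<integral>\<omega>. dispersion t k \<omega> \<partial>M) + (\<beta> * \<gamma> t)\<^sup>2 * G\<^sup>2"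
proof -
  define \<eta> where "\<eta> = \<beta> * \<gamma> t"
  define d where "d \<omega> = virtual_iter t k \<omega> - ws" for \<omega>
  define avg_grad where "avg_grad \<omega> = (\<Sum>i\<in>UNIV. pw p i *\<^sub>R sample_grad t k i \<omega>)" for \<omega>
  define cross where "cross = (\<Sum>i\<in>UNIV. pw p i * (\<integral>\<omega>. d \<omega> \<bullet> sample_grad t k i \<omega> \<partial>M))"
  have d_sq: "square_integrable M d"
    unfolding d_def[abs_def] by (intro square_integrable_diff virtual_iter_square_integrable square_integrable_const)
  have grad_sq: "square_integrable M avg_grad"
    unfolding avg_grad_def[abs_def] by (intro square_integrable_sum square_integrable_scaleR sample_grad_square_integrable)
  have "(norm (virtual_iter t (Suc k) \<omega> - ws))\<^sup>2
      = (norm (d \<omega>))\<^sup>2 - 2 * \<eta> * (\<Sum>i\<in>UNIV. pw p i * (d \<omega> \<bullet> sample_grad t k i \<omega>)) + \<eta>\<^sup>2 * (norm (avg_grad \<omega>))\<^sup>2" for \<omega>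
  proof -
    have "virtual_iter t (Suc k) \<omega> - ws = d \<omega> - \<eta> *\<^sub>R avg_grad \<omega>"
      by (simp add: virtual_iter_Suc d_def avg_grad_def \<eta>_def)
    then show ?thesis
      by (simp add: norm_diff_square avg_grad_def inner_sum_right power_mult_distrib sum_distrib_left mult_ac)
  qed
  then have expectation_expand: "(\<integral>\<omega>. (norm (virtual_iter t (Suc k) \<omega> - ws))\<^sup>2 \<partial>M)
      = (\<integral>\<omega>. (norm (d \<omega>))\<^sup>2 \<partial>M) - 2 * \<eta> * cross + \<eta>\<^sup>2 * (\<integral>\<omega>. (norm (avg_grad \<omega>))\<^sup>2 \<partial>M)"
    unfolding cross_def using square_integrable_norm_square[OF d_sq] square_integrable_norm_square[OF grad_sq]
      square_integrable_inner[OF d_sq sample_grad_square_integrable]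
    by (simp add: Bochner_Integration.integral_sum integrable_sum)
  have "2 * \<eta> * (\<mu> / 2 * (\<integral>\<omega>. (norm (d \<omega>))\<^sup>2 \<partial>M) - L * (\<integral>\<omega>. dispersion t k \<omega> \<partial>M)) \<le> 2 * \<eta> * cross"
    using integral_weighted_inner_sample_grad_ge[of t k] assms
    unfolding \<eta>_def cross_def d_def by (intro mult_left_mono) simp_all
  moreover have "\<eta>\<^sup>2 * (\<integral>\<omega>. (norm (avg_grad \<omega>))\<^sup>2 \<partial>M) \<le> \<eta>\<^sup>2 * G\<^sup>2"
    unfolding avg_grad_def by (simp add: mult_left_mono integral_norm_weighted_sample_grad_le)
  ultimately show ?thesis
    unfolding expectation_expand \<eta>_def[symmetric] d_def[symmetric] by (simp add: algebra_simps)
qed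

lemma integral_virtual_iter_E_le:
  assumes "\<beta> * \<gamma> t \<ge> 0" "\<beta> * \<mu> * \<gamma> t \<le> 1"
  shows "(\<integral>\<omega>. (norm (virtual_iter t E \<omega> - ws))\<^sup>2 \<partial>M)
    \<le> (1 - \<beta> * \<mu> * \<gamma> t) ^ E * (\<integral>\<omega>. (norm (avg_iter t \<omega> - ws))\<^sup>2 \<partial>M)
      + real E * (2 * (\<beta> * \<gamma> t) * L * dispersion_bound t + (\<beta> * \<gamma> t)\<^sup>2 * G\<^sup>2)"
proof -
  have "(\<integral>\<omega>. (norm (virtual_iter t (Suc k) \<omega> - ws))\<^sup>2 \<partial>M)
      \<le> (1 - \<beta> * \<mu> * \<gamma> t) * (\<integral>\<omega>. (norm (virtual_iter t k \<omega> - ws))\<^sup>2 \<partial>M)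
        + (2 * (\<beta> * \<gamma> t) * L * dispersion_bound t + (\<beta> * \<gamma> t)\<^sup>2 * G\<^sup>2)" if "k < E" for k
  proof -
    have "2 * (\<beta> * \<gamma> t) * L * (\<integral>\<omega>. dispersion t k \<omega> \<partial>M) \<le> 2 * (\<beta> * \<gamma> t) * L * dispersion_bound t"
      using that assms L_nonneg by (intro mult_left_mono integral_dispersion_le) simp_all
    with integral_virtual_iter_Suc_le[OF assms(1), of k] show ?thesis by (simp add: algebra_simps)
  qed
  moreover have "0 \<le> \<mu> * (\<beta> * \<gamma> t)"
    using assms(1) \<mu>_nonneg by simp
  then have "0 \<le> 1 - \<beta> * \<mu> * \<gamma> t" "1 - \<beta> * \<mu> * \<gamma> t \<le> 1"
    using assms(2) by (simp_all add: mult_ac)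
  moreover have "0 \<le> 2 * (\<beta> * \<gamma> t) * L * dispersion_bound t + (\<beta> * \<gamma> t)\<^sup>2 * G\<^sup>2"
    using assms L_nonneg dispersion_bound_nonneg by simp
  ultimately show ?thesis
    using linear_recurrence_bound[where a = "\<lambda>k. \<integral>\<omega>. (norm (virtual_iter t k \<omega> - ws))\<^sup>2 \<partial>M" and n = E and k = E]
    by (simp add: virtual_iter_0)
qed

lemma integral_avg_iter_Suc_le:
  assumes \<beta>: "0 < \<beta>" "\<beta> < 1" and \<gamma>: "0 \<le> \<gamma> t" "\<beta> * \<mu> * \<gamma> t \<le> 1"
  shows "(\<integral>\<omega>. (norm (avg_iter (Suc t) \<omega> - ws))\<^sup>2 \<partial>M)
    \<le> (1 - 1 / \<beta> + 1 / \<beta> * (1 - \<beta> * \<mu> * \<gamma> t) ^ E) * (\<integral>\<omega>. (norm (avg_iter t \<omega> - ws))\<^sup>2 \<partial>M)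
      + (real E * (2 * \<gamma> t * L * dispersion_bound t + \<beta> * (\<gamma> t)\<^sup>2 * G\<^sup>2)
         + (1 - \<beta>) * (\<gamma> t)\<^sup>2 * (real E)\<^sup>2 * G\<^sup>2)"
proof -
  let ?X = "\<integral>\<omega>. (norm (avg_iter t \<omega> - ws))\<^sup>2 \<partial>M"
  have "square_integrable M (\<lambda>\<omega>. virtual_iter t E \<omega> - ws)" "square_integrable M (\<lambda>\<omega>. avg_iter t \<omega> - ws)"
      "square_integrable M (\<lambda>\<omega>. virtual_iter t E \<omega> - avg_iter t \<omega>)"
    by (intro square_integrable_diff virtual_iter_square_integrable avg_iter_square_integrable square_integrable_const)+
  then have expectation_eq: "(\<integral>\<omega>. (norm (avg_iter (Suc t) \<omega> - ws))\<^sup>2 \<partial>M)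
      = 1 / \<beta> * (\<integral>\<omega>. (norm (virtual_iter t E \<omega> - ws))\<^sup>2 \<partial>M) + (1 - 1 / \<beta>) * ?X
        + (1 - \<beta>) / \<beta>\<^sup>2 * (\<integral>\<omega>. (norm (virtual_iter t E \<omega> - avg_iter t \<omega>))\<^sup>2 \<partial>M)"
    using \<beta> by (simp add: norm_avg_iter_Suc_minus_square square_integrable_norm_square)
  have "1 / \<beta> * (\<integral>\<omega>. (norm (virtual_iter t E \<omega> - ws))\<^sup>2 \<partial>M)
      \<le> 1 / \<beta> * ((1 - \<beta> * \<mu> * \<gamma> t) ^ E * ?X + real E * (2 * (\<beta> * \<gamma> t) * L * dispersion_bound t + (\<beta> * \<gamma> t)\<^sup>2 * G\<^sup>2))"
    using \<beta> \<gamma> by (intro mult_left_mono integral_virtual_iter_E_le) simp_all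
  moreover have "(1 - \<beta>) / \<beta>\<^sup>2 * (\<integral>\<omega>. (norm (virtual_iter t E \<omega> - avg_iter t \<omega>))\<^sup>2 \<partial>M)
      \<le> (1 - \<beta>) / \<beta>\<^sup>2 * ((\<beta> * \<gamma> t)\<^sup>2 * (real E)\<^sup>2 * G\<^sup>2)"
    using \<beta> by (intro mult_left_mono integral_virtual_drift_le) simp
  moreover have "1 / \<beta> * ((1 - \<beta> * \<mu> * \<gamma> t) ^ E * ?X
        + real E * (2 * (\<beta> * \<gamma> t) * L * dispersion_bound t + (\<beta> * \<gamma> t)\<^sup>2 * G\<^sup>2))
      + (1 - 1 / \<beta>) * ?X + (1 - \<beta>) / \<beta>\<^sup>2 * ((\<beta> * \<gamma> t)\<^sup>2 * (real E)\<^sup>2 * G\<^sup>2)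
      = (1 - 1 / \<beta> + 1 / \<beta> * (1 - \<beta> * \<mu> * \<gamma> t) ^ E) * ?X
        + (real E * (2 * \<gamma> t * L * dispersion_bound t + \<beta> * (\<gamma> t)\<^sup>2 * G\<^sup>2) + (1 - \<beta>) * (\<gamma> t)\<^sup>2 * (real E)\<^sup>2 * G\<^sup>2)"
    using \<beta> by (simp add: field_simps power2_eq_square)
  ultimately show ?thesis
    unfolding expectation_eq by linarith
qed

end

lemma contraction_factor_le:
  fixes \<beta> \<mu> \<gamma> :: real
  assumes "0 < \<beta>" "0 \<le> \<beta> * \<mu> * \<gamma>" "\<beta> * \<mu> * \<gamma> \<le> 1" "1 \<le> E"
  shows "1 - 1 / \<beta> + 1 / \<beta> * (1 - \<beta> * \<mu> * \<gamma>) ^ E \<le> 1 - \<mu> * \<gamma>"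
proof -
  have "(1 - \<beta> * \<mu> * \<gamma>) ^ E \<le> (1 - \<beta> * \<mu> * \<gamma>) ^ 1"
    using assms by (intro power_decreasing) auto
  then have "1 / \<beta> * (1 - \<beta> * \<mu> * \<gamma>) ^ E \<le> 1 / \<beta> * (1 - \<beta> * \<mu> * \<gamma>)"
    using assms by (intro mult_left_mono) auto
  moreover have "1 - 1 / \<beta> + 1 / \<beta> * (1 - \<beta> * \<mu> * \<gamma>) = 1 - \<mu> * \<gamma>"
    using assms by (simp add: field_simps)
  ultimately show ?thesis by linarith
qed

lemma round_error_le_cube:
  fixes \<beta> \<gamma> L G c :: real and E :: nat
  assumes \<beta>: "0 < \<beta>" "\<beta> < 1" and E: "1 \<le> E" and \<gamma>: "0 < \<gamma>" "\<gamma> * L \<le> 1 / 2"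
    and L_nonneg: "0 \<le> L" and c_nonneg: "0 \<le> c"
  shows "real E * (2 * \<gamma> * L * (2 * \<beta>\<^sup>2 * \<gamma>\<^sup>2 * (real E)\<^sup>2 * G\<^sup>2 + 2 * (1 - \<beta>)\<^sup>2 * c * (real E)\<^sup>2 * G\<^sup>2)
            + \<beta> * \<gamma>\<^sup>2 * G\<^sup>2) + (1 - \<beta>) * \<gamma>\<^sup>2 * (real E)\<^sup>2 * G\<^sup>2
    \<le> 4 * (\<gamma>\<^sup>2 * G\<^sup>2 * real E ^ 3) + 2 * ((1 - \<beta>)\<^sup>2 * c * G\<^sup>2 * real E ^ 3)"
proof -
  have E_le_cube: "real E \<le> real E ^ 3" and E_square_le_cube: "(real E)\<^sup>2 \<le> real E ^ 3"
    using power_increasing[of 1 3 "real E"] power_increasing[of 2 3 "real E"] E by simp_all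
  define K where "K = \<gamma>\<^sup>2 * G\<^sup>2 * real E ^ 3"
  define D where "D = 2 * \<beta>\<^sup>2 * \<gamma>\<^sup>2 * (real E)\<^sup>2 * G\<^sup>2 + 2 * (1 - \<beta>)\<^sup>2 * c * (real E)\<^sup>2 * G\<^sup>2"
  have "real E * (2 * \<gamma> * L * D) \<le> real E * D"
    using \<gamma> L_nonneg c_nonneg by (intro mult_left_mono mult_left_le_one_le) (auto simp: D_def)
  also have "real E * D = \<beta>\<^sup>2 * (2 * K) + 2 * ((1 - \<beta>)\<^sup>2 * c * G\<^sup>2 * real E ^ 3)"
    by (simp add: D_def K_def power2_eq_square power3_eq_cube algebra_simps)
  also have "\<beta>\<^sup>2 * (2 * K) \<le> 2 * K"
    using \<beta> by (intro mult_left_le_one_le) (auto simp: K_def power_le_one)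
  finally have "real E * (2 * \<gamma> * L * D) \<le> 2 * K + 2 * ((1 - \<beta>)\<^sup>2 * c * G\<^sup>2 * real E ^ 3)"
    by simp
  moreover have "\<beta> * real E \<le> real E ^ 3"
    using mult_mono[OF order.strict_implies_order[OF \<beta>(2)] E_le_cube] \<beta> by simp
  then have "real E * (\<beta> * \<gamma>\<^sup>2 * G\<^sup>2) \<le> K"
    using mult_right_mono[of "\<beta> * real E" "real E ^ 3" "\<gamma>\<^sup>2 * G\<^sup>2"] by (simp add: K_def mult_ac)
  moreover have "(1 - \<beta>) * (real E)\<^sup>2 \<le> real E ^ 3"
    using mult_mono[of "1 - \<beta>" 1 "(real E)\<^sup>2" "real E ^ 3"] E_square_le_cube \<beta> by simp
  then have "(1 - \<beta>) * \<gamma>\<^sup>2 * (real E)\<^sup>2 * G\<^sup>2 \<le> K"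
    using mult_right_mono[of "(1 - \<beta>) * (real E)\<^sup>2" "real E ^ 3" "\<gamma>\<^sup>2 * G\<^sup>2"] by (simp add: K_def mult_ac)
  ultimately show ?thesis
    unfolding D_def K_def[symmetric] by (simp add: algebra_simps)
qed

lemma round_error_le:
  fixes \<beta> \<gamma> \<gamma>' L \<mu> G S \<sigma> \<Gamma> :: real and E :: nat and b :: bool
  assumes \<beta>: "0 < \<beta>" "\<beta> < 1" and E: "1 \<le> E" and \<gamma>: "0 < \<gamma>" "\<gamma> * L \<le> 1 / 2"
    and nonneg: "0 \<le> L" "0 \<le> \<mu>" "0 \<le> S" "0 \<le> \<Gamma>"
  shows "real E * (2 * \<gamma> * L * (2 * \<beta>\<^sup>2 * \<gamma>\<^sup>2 * (real E)\<^sup>2 * G\<^sup>2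
            + 2 * (1 - \<beta>)\<^sup>2 * (if b then \<gamma>'\<^sup>2 else 0) * (real E)\<^sup>2 * G\<^sup>2) + \<beta> * \<gamma>\<^sup>2 * G\<^sup>2)
          + (1 - \<beta>) * \<gamma>\<^sup>2 * (real E)\<^sup>2 * G\<^sup>2
    \<le> 8 * \<gamma>\<^sup>2 * real E ^ 3 * G\<^sup>2 * (4 + (1 - \<beta>)\<^sup>2 + (if b then 8 * \<gamma>'\<^sup>2 * (1 - \<beta>)\<^sup>2 / (\<gamma>\<^sup>2 * \<beta>\<^sup>2) else 0))
       + \<mu> * \<gamma> ^ 3 * \<beta> * (1 - \<beta>) * real E ^ 3 * G\<^sup>2 + \<gamma>\<^sup>2 * real E * S * \<sigma>\<^sup>2 + 6 * \<gamma>\<^sup>2 * L * real E * \<Gamma>"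
proof -
  define T where "T = (1 - \<beta>)\<^sup>2 * (if b then \<gamma>'\<^sup>2 else 0) * G\<^sup>2 * real E ^ 3"
  define X where "X = (if b then 8 * \<gamma>'\<^sup>2 * (1 - \<beta>)\<^sup>2 / (\<gamma>\<^sup>2 * \<beta>\<^sup>2) else 0)"
  have previous_round: "2 * T \<le> 8 * \<gamma>\<^sup>2 * real E ^ 3 * G\<^sup>2 * X"
  proof (cases b)
    case True
    have "2 \<le> 64 / \<beta>\<^sup>2"
      using \<beta> power_le_one[of \<beta> 2] by (simp add: field_simps)
    then have "2 * T \<le> 64 / \<beta>\<^sup>2 * T" by (rule mult_right_mono) (simp add: T_def)
    then show ?thesis using True \<gamma> \<beta> by (simp add: T_def X_def field_simps)
  qed (simp add: T_def X_def)
  define rest where "rest = 8 * \<gamma>\<^sup>2 * real E ^ 3 * G\<^sup>2 * (1 - \<beta>)\<^sup>2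
      + \<mu> * \<gamma> ^ 3 * \<beta> * (1 - \<beta>) * real E ^ 3 * G\<^sup>2 + \<gamma>\<^sup>2 * real E * S * \<sigma>\<^sup>2 + 6 * \<gamma>\<^sup>2 * L * real E * \<Gamma>"
  have "0 \<le> rest"
    unfolding rest_def using \<beta> \<gamma> nonneg by (intro add_nonneg_nonneg mult_nonneg_nonneg) auto
  moreover have "8 * \<gamma>\<^sup>2 * real E ^ 3 * G\<^sup>2 * (4 + (1 - \<beta>)\<^sup>2 + X) + \<mu> * \<gamma> ^ 3 * \<beta> * (1 - \<beta>) * real E ^ 3 * G\<^sup>2
      + \<gamma>\<^sup>2 * real E * S * \<sigma>\<^sup>2 + 6 * \<gamma>\<^sup>2 * L * real E * \<Gamma>
      = 32 * (\<gamma>\<^sup>2 * G\<^sup>2 * real E ^ 3) + 8 * \<gamma>\<^sup>2 * real E ^ 3 * G\<^sup>2 * X + rest"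
    by (simp add: rest_def algebra_simps)
  moreover have "0 \<le> \<gamma>\<^sup>2 * G\<^sup>2 * real E ^ 3" and c: "0 \<le> (if b then \<gamma>'\<^sup>2 else 0)"
    by simp_all
  ultimately show ?thesis
    using previous_round round_error_le_cube[OF \<beta> E \<gamma> nonneg(1) c, of G, folded T_def]
    unfolding X_def[symmetric] by linarith
qed

theorem lemma8:
  fixes M :: "'a measure" and N :: "'x measure"
    and p :: "'c::finite \<Rightarrow> 'c \<Rightarrow> real"
    and F :: "'c \<Rightarrow> 'w::euclidean_space \<Rightarrow> real" and dF :: "'c \<Rightarrow> 'w \<Rightarrow> 'w"
    and g :: "'c \<Rightarrow> 'w \<Rightarrow> 'x \<Rightarrow> 'w"
    and \<xi> :: "nat \<Rightarrow> nat \<Rightarrow> 'c \<Rightarrow> 'a \<Rightarrow> 'x"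
    and \<beta> L \<mu> \<sigma> G :: real and E t :: nat and \<gamma> :: "nat \<Rightarrow> real"
    and w0 ws :: 'w and wi :: "'c \<Rightarrow> 'w"
  defines "sg \<equiv> (\<lambda>s k i w \<omega>. g i w (\<xi> s k i \<omega>))"
  defines "Fb \<equiv> (\<lambda>w. \<Sum>i\<in>UNIV. pw p i * F i w)"
  assumes M: "prob_space M"
    and p_nonneg: "\<And>i n. p i n \<ge> 0" and p_sym: "\<And>i n. p i n = p n i"
    and p_diag: "\<And>i. p i i = 0" and p_sum: "(\<Sum>i\<in>UNIV. \<Sum>n\<in>UNIV. p i n) = 1"
    and p_pos: "\<And>i. pw p i > 0"
    and smooth: "\<And>i. L_smooth L (F i) (dF i)"
    and sconv: "\<And>i. strongly_convex \<mu> (F i)"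
    and \<mu>_pos: "\<mu> > 0"
    and ws_min: "\<And>w. Fb ws \<le> Fb w"
    and wi_min: "\<And>i w. F i (wi i) \<le> F i w"
    and \<beta>: "0 < \<beta>" "\<beta> < 1"
    and E: "E \<ge> 1"
    and \<gamma>_pos: "\<And>s. \<gamma> s > 0"
    and \<gamma>_t: "\<gamma> t \<le> min (1 / (2 * L)) (1 / (\<beta> * \<mu>))"
    and g_meas: "\<And>i. (\<lambda>(w, x). g i w x) \<in> borel_measurable (borel \<Otimes>\<^sub>M N)"
    and indep: "prob_space.indep_vars M (\<lambda>_. N) (\<lambda>(s, k, i). \<xi> s k i) UNIV"
    and unbiased: "\<And>s k i w. integrable (distr M N (\<xi> s k i)) (g i w) \<and>
                      (\<integral>x. g i w x \<partial>distr M N (\<xi> s k i)) = dF i w"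
    and variance: "\<And>s k i.
        integrable M (\<lambda>\<omega>. (norm (g i (pert \<beta> \<gamma> sg (wbar p \<beta> E \<gamma> sg w0 s \<omega>) (uanc p \<beta> E \<gamma> sg w0 s \<omega>) s k i \<omega>) (\<xi> s k i \<omega>)
                              - dF i (pert \<beta> \<gamma> sg (wbar p \<beta> E \<gamma> sg w0 s \<omega>) (uanc p \<beta> E \<gamma> sg w0 s \<omega>) s k i \<omega>)))\<^sup>2) \<and>
        (\<integral>\<omega>. (norm (g i (pert \<beta> \<gamma> sg (wbar p \<beta> E \<gamma> sg w0 s \<omega>) (uanc p \<beta> E \<gamma> sg w0 s \<omega>) s k i \<omega>) (\<xi> s k i \<omega>)
                              - dF i (pert \<beta> \<gamma> sg (wbar p \<beta> E \<gamma> sg w0 s \<omega>) (uanc p \<beta> E \<gamma> sg w0 s \<omega>) s k i \<omega>)))\<^sup>2 \<partial>M) \<le> \<sigma>\<^sup>2"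
    and second_moment: "\<And>s k i.
        integrable M (\<lambda>\<omega>. (norm (g i (pert \<beta> \<gamma> sg (wbar p \<beta> E \<gamma> sg w0 s \<omega>) (uanc p \<beta> E \<gamma> sg w0 s \<omega>)
                                        s k i \<omega>) (\<xi> s k i \<omega>)))\<^sup>2) \<and>
        (\<integral>\<omega>. (norm (g i (pert \<beta> \<gamma> sg (wbar p \<beta> E \<gamma> sg w0 s \<omega>) (uanc p \<beta> E \<gamma> sg w0 s \<omega>)
                              s k i \<omega>) (\<xi> s k i \<omega>)))\<^sup>2 \<partial>M) \<le> G\<^sup>2"
  shows "(let \<kappa> = 1 - 1 / \<beta> + 1 / \<beta> * (1 - \<beta> * \<mu> * \<gamma> t) ^ E;
             S = (\<Sum>i\<in>UNIV. (pw p i)\<^sup>2);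
             \<Gamma> = Fb ws - (\<Sum>i\<in>UNIV. pw p i * F i (wi i));
             A = 8 * (\<gamma> t)\<^sup>2 * real E ^ 3 * G\<^sup>2 *
                   (4 + (1 - \<beta>)\<^sup>2 + (if t \<ge> 1 then 8 * (\<gamma> (t - 1))\<^sup>2 * (1 - \<beta>)\<^sup>2 / ((\<gamma> t)\<^sup>2 * \<beta>\<^sup>2) else 0))
                 + \<mu> * (\<gamma> t) ^ 3 * \<beta> * (1 - \<beta>) * real E ^ 3 * G\<^sup>2
                 + (\<gamma> t)\<^sup>2 * real E * S * \<sigma>\<^sup>2
                 + 6 * (\<gamma> t)\<^sup>2 * L * real E * \<Gamma>
         in (\<integral>\<omega>. (norm (wbar p \<beta> E \<gamma> sg w0 (Suc t) \<omega> - ws))\<^sup>2 \<partial>M)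
              \<le> \<kappa> * (\<integral>\<omega>. (norm (wbar p \<beta> E \<gamma> sg w0 t \<omega> - ws))\<^sup>2 \<partial>M) + A
            \<and> \<kappa> \<le> 1 - \<mu> * \<gamma> t)"
proof -
  interpret perturbed_fl_convex M N p g \<xi> sg \<beta> \<gamma> E w0 G F dF L \<mu> ws
  proof (intro perturbed_fl_convex.intro perturbed_fl.intro perturbed_fl_axioms.intro
      perturbed_fl_convex_axioms.intro)
    show "\<And>w. (\<Sum>i\<in>UNIV. pw p i * F i ws) \<le> (\<Sum>i\<in>UNIV. pw p i * F i w)"
      using ws_min by (simp add: Fb_def)
  qed (use M p_nonneg p_sym p_sum p_pos smooth sconv \<mu>_pos g_meas indep unbiased second_moment in
      \<open>simp_all add: sg_def\<close>)
  have \<gamma>L: "\<gamma> t * L \<le> 1 / 2"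
    using \<gamma>_t L_nonneg by (cases "L = 0") (simp_all add: field_simps)
  have \<beta>\<mu>\<gamma>: "0 \<le> \<beta> * \<mu> * \<gamma> t" "\<beta> * \<mu> * \<gamma> t \<le> 1"
    using \<gamma>_t \<gamma>_pos[of t] \<beta> \<mu>_pos by (simp_all add: field_simps)
  have Fb_ws: "0 \<le> Fb ws - (\<Sum>i\<in>UNIV. pw p i * F i (wi i))"
    unfolding Fb_def using wi_min by (simp add: sum_mono mult_left_mono pw_nonneg)
  note round = integral_avg_iter_Suc_le[OF \<beta> less_imp_le[OF \<gamma>_pos] \<beta>\<mu>\<gamma>(2),
      unfolded avg_iter_def dispersion_bound_def]
  have "0 \<le> (\<Sum>i\<in>UNIV. (pw p i)\<^sup>2)"
    by (simp add: sum_nonneg)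
  note error = round_error_le[OF \<beta> E \<gamma>_pos \<gamma>L L_nonneg less_imp_le[OF \<mu>_pos] this Fb_ws,
      where \<gamma>' = "\<gamma> (t - 1)" and b = "t \<ge> 1" and G = G and \<sigma> = \<sigma>]
  show ?thesis
    unfolding Let_def
    by (rule conjI[OF order_trans[OF round add_left_mono[OF error]] contraction_factor_le[OF \<beta>(1) \<beta>\<mu>\<gamma> E]])
qed

end
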